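(* Assume $n_1,n_2\in[1,2]$ and (IE). Then for all $\varepsilon\in(0,1)$ and $T>0$ there exists $C(\varepsilon,T)>0$ such that, with $\hat T:=\min\{T,T_{max,\varepsilon}\}$, $$\int_\Omega u_{\varepsilon x}^2(x,t)\,dx+\int_\Omega v_{\varepsilon x}^2(x,t)\,dx\le C(\varepsilon,T)\quad\text{and}\quad\|u_\varepsilon(\cdot,t)\|_{L^\infty(\Omega)}+\|v_\varepsilon(\cdot,t)\|_{L^\infty(\Omega)}\le C(\varepsilon,T)$$ for all $t\in(0,\hat T)$.
   Context: Let $\Omega\subset\mathbb{R}$ be a bounded open interval, $D_i,a_i,\lambda_i,\chi_i>0$ ($i=1,2$), and fix $\alpha\in(0,\frac12]$. Assumption (IE): $u_0,v_0\in W^{1,2}(\Omega)$ with $u_0>0,v_0>0$ in $\overline\Omega$; for each $\varepsilon\in(0,1)$, $u_{0\varepsilon},v_{0\varepsilon}\in C^5(\overline\Omega)$ with $u_{0\varepsilon x}=u_{0\varepsilon xxx}=v_{0\varepsilon x}=v_{0\varepsilon xxx}=0$ on $\partial\Omega$; $\frac12\inf_\Omega u_0\le u_{0\varepsilon}\le u_0+1$, $\frac12\inf_\Omega v_0\le v_{0\varepsilon}\le v_0+1$ in $\Omega$; $\int_\Omega u_{0\varepsilon x}^2\le\int_\Omega u_{0x}^2+1$, $\int_\Omega v_{0\varepsilon x}^2\le\int_\Omega v_{0x}^2+1$; $u_{0\varepsilon}\to u_0$, $v_{0\varepsilon}\to v_0$ a.e. as $\varepsilon\searrow0$. Approximating problem: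 $u_t=-\varepsilon\big(\frac{u^4}{u^{4-n_1}+\varepsilon}u_{xxx}\big)_x+\varepsilon^{\alpha/2}(u^{-\alpha}u_x)_x+D_1u_{xx}-\chi_1\big(\frac{u^{5-n_1}}{u^{4-n_1}+\varepsilon}v_x\big)_x+\frac{3u^3}{3u^2+\varepsilon}(\lambda_1-u+a_1v)$, $v_t=-\varepsilon\big(\frac{v^4}{v^{4-n_2}+\varepsilon}v_{xxx}\big)_x+\varepsilon^{\alpha/2}(v^{-\alpha}v_x)_x+D_2v_{xx}+\chi_2\big(\frac{v^{5-n_2}}{v^{4-n_2}+\varepsilon}u_x\big)_x+\frac{3v^3}{3v^2+\varepsilon}(\lambda_2-v-a_2u)$ in $\Omega\times(0,\infty)$, $u_x=v_x=u_{xxx}=v_{xxx}=0$ on $\partial\Omega$, $u(\cdot,0)=u_{0\varepsilon}$, $v(\cdot,0)=v_{0\varepsilon}$. For each $\varepsilon$ it has a classical solution $(u_\varepsilon,v_\varepsilon)$, positive in $\overline\Omega\times[0,T_{max,\varepsilon})$, belonging to $\bigcap_{s\in(3/2,2)}C^0([0,T_{max,\varepsilon});W^{s,2}(\Omega))\cap C^{4,1}(\overline\Omega\times(0,T_{max,\varepsilon}))$, where $T_{max,\varepsilon}\in(0,\infty]$ is maximal: either $T_{max,\varepsilon}=\infty$ or $\limsup_{t\nearrow T_{max,\varepsilon}}\{\|u_\varepsilon(\cdot,t)\|_{W^{2,2}}+\|1/u_\varepsilon(\cdot,t)\|_{L^\infty}+\|v_\varepsilon(\cdot,t)\|_{W^{2,2}}+\|1/v_\varepsilon(\cdot,t)\|_{L^\infty}\}=\infty$.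 *)

theory Defs
  imports "HOL-Analysis.Analysis"
begin

definition tint :: "ereal \<Rightarrow> real set" where
  "tint Tm = {t. 0 < t \<and> ereal t < Tm}"

definition tint0 :: "ereal \<Rightarrow> real set" where
  "tint0 Tm = {t. 0 \<le> t \<and> ereal t < Tm}"

text \<open>W^{1,2}(a,b) initial datum (continuous representative u0 with weak derivative u0x in L^2),
  positive on the closed interval.\<close>
definition W12_pos :: "real \<Rightarrow> real \<Rightarrow> (real \<Rightarrow> real) \<Rightarrow> (real \<Rightarrow> real) \<Rightarrow> bool" where
  "W12_pos a b u0 u0x \<longleftrightarrow>
     u0x absolutely_integrable_on {a..b} \<and>
     (\<lambda>x. (u0x x)\<^sup>2) integrable_on {a..b} \<and>
     (\<forall>x\<in>{a..b}. (u0x has_integral (u0 x - u0 a)) {a..x}) \<and>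
     (\<forall>x\<in>{a..b}. 0 < u0 x)"

text \<open>Approximate initial data: U eps k is the k-th derivative of u_{0 eps}, k = 0..5.\<close>
definition approx_data ::
  "real \<Rightarrow> real \<Rightarrow> (real \<Rightarrow> real) \<Rightarrow> (real \<Rightarrow> real) \<Rightarrow> (real \<Rightarrow> nat \<Rightarrow> real \<Rightarrow> real) \<Rightarrow> bool" where
  "approx_data a b u0 u0x U \<longleftrightarrow>
     (\<forall>eps\<in>{0<..<1}.
        (\<forall>k<5. \<forall>x\<in>{a..b}. (U eps k has_real_derivative U eps (Suc k) x) (at x within {a..b})) \<and>
        continuous_on {a..b} (U eps 5) \<and>
        U eps 1 a = 0 \<and> U eps 1 b = 0 \<and> U eps 3 a = 0 \<and> U eps 3 b = 0 \<and>
        (\<forall>x\<in>{a<..<b}. (INF y\<in>{a<..<b}. u0 y) / 2 \<le> U eps 0 x \<and> U eps 0 x \<le> u0 x + 1) \<and>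
        integral {a..b} (\<lambda>x. (U eps 1 x)\<^sup>2) \<le> integral {a..b} (\<lambda>x. (u0x x)\<^sup>2) + 1) \<and>
     (AE x in lborel. x \<in> {a<..<b} \<longrightarrow> ((\<lambda>eps. U eps 0 x) \<longlongrightarrow> u0 x) (at_right 0))"

text \<open>Classical regularity of one solution component on [a,b] x (0,Tm), with explicit
  derivative functions: w_x, w_xx, w_xxx, w_xxxx (one-sided at the endpoints) and w_t;
  in addition w and w_x are continuous up to t = 0 (consequence of
  C^0([0,Tm); W^{s,2}) with s > 3/2).\<close>
definition classical_comp ::
  "real \<Rightarrow> real \<Rightarrow> ereal \<Rightarrow> (real \<Rightarrow> real \<Rightarrow> real) \<Rightarrow> (real \<Rightarrow> real \<Rightarrow> real) \<Rightarrow> (real \<Rightarrow> real \<Rightarrow> real)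
    \<Rightarrow> (real \<Rightarrow> real \<Rightarrow> real) \<Rightarrow> (real \<Rightarrow> real \<Rightarrow> real) \<Rightarrow> (real \<Rightarrow> real \<Rightarrow> real) \<Rightarrow> bool" where
  "classical_comp a b Tm w wx wxx wxxx wxxxx wt \<longleftrightarrow>
     (\<forall>t\<in>tint0 Tm. \<forall>x\<in>{a..b}. ((\<lambda>y. w y t) has_real_derivative wx x t) (at x within {a..b})) \<and>
     (\<forall>t\<in>tint Tm. \<forall>x\<in>{a..b}.
        ((\<lambda>y. wx y t) has_real_derivative wxx x t) (at x within {a..b}) \<and>
        ((\<lambda>y. wxx y t) has_real_derivative wxxx x t) (at x within {a..b}) \<and>
        ((\<lambda>y. wxxx y t) has_real_derivative wxxxx x t) (at x within {a..b}) \<and>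
        ((\<lambda>s. w x s) has_real_derivative wt x t) (at t)) \<and>
     continuous_on ({a..b} \<times> tint0 Tm) (\<lambda>(x,t). w x t) \<and>
     continuous_on ({a..b} \<times> tint0 Tm) (\<lambda>(x,t). wx x t) \<and>
     continuous_on ({a..b} \<times> tint Tm) (\<lambda>(x,t). wxx x t) \<and>
     continuous_on ({a..b} \<times> tint Tm) (\<lambda>(x,t). wxxx x t) \<and>
     continuous_on ({a..b} \<times> tint Tm) (\<lambda>(x,t). wxxxx x t) \<and>
     continuous_on ({a..b} \<times> tint Tm) (\<lambda>(x,t). wt x t)"

text \<open>Flux and reaction terms of the approximating problem (u-equation: divergence form
  u_t = (fluxU)_x + reacU; similarly for v).\<close>
definition fluxU :: "real \<Rightarrow> real \<Rightarrow> real \<Rightarrow> real \<Rightarrow> real \<Rightarrow> real \<Rightarrow> real \<Rightarrow> real \<Rightarrow> real \<Rightarrow> real" where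
  "fluxU eps alpha D chi n w wx wxxx zx =
     - eps * (w ^ 4 / (w powr (4 - n) + eps)) * wxxx
     + eps powr (alpha / 2) * (w powr (- alpha) * wx)
     + D * wx
     - chi * (w powr (5 - n) / (w powr (4 - n) + eps)) * zx"

definition fluxV :: "real \<Rightarrow> real \<Rightarrow> real \<Rightarrow> real \<Rightarrow> real \<Rightarrow> real \<Rightarrow> real \<Rightarrow> real \<Rightarrow> real \<Rightarrow> real" where
  "fluxV eps alpha D chi n w wx wxxx zx =
     - eps * (w ^ 4 / (w powr (4 - n) + eps)) * wxxx
     + eps powr (alpha / 2) * (w powr (- alpha) * wx)
     + D * wx
     + chi * (w powr (5 - n) / (w powr (4 - n) + eps)) * zx"

definition reacU :: "real \<Rightarrow> real \<Rightarrow> real \<Rightarrow> real \<Rightarrow> real \<Rightarrow> real" where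
  "reacU eps lam aa u v = 3 * u ^ 3 / (3 * u\<^sup>2 + eps) * (lam - u + aa * v)"

definition reacV :: "real \<Rightarrow> real \<Rightarrow> real \<Rightarrow> real \<Rightarrow> real \<Rightarrow> real" where
  "reacV eps lam aa u v = 3 * v ^ 3 / (3 * v\<^sup>2 + eps) * (lam - v - aa * u)"

definition W22n :: "real \<Rightarrow> real \<Rightarrow> (real \<Rightarrow> real) \<Rightarrow> (real \<Rightarrow> real) \<Rightarrow> (real \<Rightarrow> real) \<Rightarrow> real" where
  "W22n a b w wx wxx = sqrt (integral {a..b} (\<lambda>x. (w x)\<^sup>2 + (wx x)\<^sup>2 + (wxx x)\<^sup>2))"

definition Linf :: "real \<Rightarrow> real \<Rightarrow> (real \<Rightarrow> real) \<Rightarrow> real" where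
  "Linf a b f = (SUP x\<in>{a<..<b}. \<bar>f x\<bar>)"

text \<open>Maximality of Tm: either Tm = infinity or limsup_{t -> Tm} N(t) = infinity.\<close>
definition maximal_time :: "ereal \<Rightarrow> (real \<Rightarrow> real) \<Rightarrow> bool" where
  "maximal_time Tm N \<longleftrightarrow> Tm = \<infinity> \<or>
     (\<forall>M. \<forall>s. ereal s < Tm \<longrightarrow> (\<exists>t\<in>tint Tm. s < t \<and> M < N t))"

end

theory Submission
  imports Defs
begin

text \<open>
  Integrating the equations over the interval (the fluxes vanish at the end points) shows that the
  weighted mass \<open>\<integral>u + a1/a2 \<integral>v\<close> grows at most exponentially: the weight makes the
  competition terms cancel. Testing the equations with \<open>-u_xx\<close> and \<open>-v_xx\<close>, the thin-film
  and diffusion terms are dissipative; for the term with coefficient \<open>eps^(alpha/2)\<close> this is the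
  Bernis-type inequality \<open>\<integral> u^(-alpha) u_x u_xxx \<le> 0\<close>, valid for \<open>alpha \<le> 1/2\<close>, and the
  chemotaxis cross terms are absorbed by the thin-film dissipation. The reaction terms are
  controlled by \<open>sup (u_x\<^sup>2 + v_x\<^sup>2) \<le> \<integral> 2|u_x u_xx| + 2|v_x v_xx|\<close>, which Young's inequality
  splits between the diffusive dissipation and the energy \<open>E = \<integral>u_x\<^sup>2 + \<integral>v_x\<^sup>2\<close>. Hence
  \<open>E' \<le> K E\<close> with \<open>K\<close> depending only on the mass bound, Gronwall's lemma bounds \<open>E\<close> on
  \<open>(0, T)\<close>, and a sup norm is bounded by the mean plus \<open>\<integral>|f_x|\<close>.
\<close>

section \<open>Calculus on a compact interval\<close>

lemma continuous_on_slice: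
  fixes f :: "'a::topological_space \<Rightarrow> 'b::topological_space \<Rightarrow> 'c::topological_space"
  assumes "continuous_on (A \<times> S) (\<lambda>(x, s). f x s)" "s \<in> S"
  shows "continuous_on A (\<lambda>x. f x s)"
  using continuous_on_compose2[OF assms(1), of A "\<lambda>x. (x, s)"] assms(2)
  by (simp add: continuous_on_Pair image_subset_iff)

lemma continuous_on_integral_param:
  fixes f :: "real \<Rightarrow> 'a::topological_space \<Rightarrow> real"
  assumes "continuous_on ({a..b} \<times> S) (\<lambda>(x, s). f x s)"
  shows "continuous_on S (\<lambda>s. integral {a..b} (\<lambda>x. f x s))"
  using integral_continuous_on_param[of S a b "\<lambda>s x. f x s"] continuous_on_swap_args[OF assms]
  by simp

lemma has_real_derivative_integral_param:
  fixes f f' :: "real \<Rightarrow> real \<Rightarrow> real"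
  assumes "open S" "convex S" "t \<in> S"
    and "\<And>s x. s \<in> S \<Longrightarrow> x \<in> {a..b} \<Longrightarrow> ((\<lambda>s. f x s) has_real_derivative f' x s) (at s)"
    and "continuous_on ({a..b} \<times> S) (\<lambda>(x, s). f' x s)"
    and "\<And>s. s \<in> S \<Longrightarrow> continuous_on {a..b} (\<lambda>x. f x s)"
  shows "((\<lambda>s. integral {a..b} (\<lambda>x. f x s)) has_real_derivative integral {a..b} (\<lambda>x. f' x t)) (at t)"
proof -
  have "((\<lambda>s. integral (cbox a b) (\<lambda>x. f x s)) has_real_derivative integral (cbox a b) (\<lambda>x. f' x t))
          (at t within S)"
    using assms continuous_on_swap_args[OF assms(5)]
    by (intro leibniz_rule_field_derivative[where f = "\<lambda>s x. f x s" and fx = "\<lambda>s x. f' x s"])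
       (auto intro: has_field_derivative_at_within integrable_continuous_interval)
  then show ?thesis
    using at_within_open[OF assms(3,1)] by simp
qed

lemma has_integral_derivative_vanishing_ends:
  fixes P P' :: "real \<Rightarrow> real"
  assumes "a \<le> b" "continuous_on {a..b} P"
    and "\<And>x. x \<in> {a<..<b} \<Longrightarrow> (P has_real_derivative P' x) (at x)"
    and "P a = 0" "P b = 0"
  shows "(P' has_integral 0) {a..b}"
  using fundamental_theorem_of_calculus_interior[of a b P P'] assms
  by (simp add: has_real_derivative_iff_has_vector_derivative)

lemma integral_by_parts_vanishing_ends:
  fixes g g' F G :: "real \<Rightarrow> real"
  assumes "a \<le> b"
    and g: "\<And>x. x \<in> {a..b} \<Longrightarrow> (g has_real_derivative g' x) (at x within {a..b})"
    and "continuous_on {a..b} g'" "continuous_on {a..b} F" "continuous_on {a..b} G"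
    and F: "\<And>x. x \<in> {a<..<b} \<Longrightarrow> (F has_real_derivative G x) (at x)"
    and "F a = 0" "F b = 0"
  shows "integral {a..b} (\<lambda>x. g x * G x) = - integral {a..b} (\<lambda>x. g' x * F x)"
proof -
  have cg: "continuous_on {a..b} g"
    using g by (rule DERIV_continuous_on)
  have "((\<lambda>x. g' x * F x + g x * G x) has_integral 0) {a..b}"
  proof (rule has_integral_derivative_vanishing_ends)
    fix x assume x: "x \<in> {a<..<b}"
    then have "(g has_real_derivative g' x) (at x)"
      using g[of x] at_within_Icc_at[of a x b] by auto
    with F[OF x] show "((\<lambda>x. g x * F x) has_real_derivative g' x * F x + g x * G x) (at x)"
      by (auto intro!: derivative_eq_intros)
  qed (use assms cg in \<open>auto intro!: continuous_intros\<close>)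
  then have "integral {a..b} (\<lambda>x. g' x * F x) + integral {a..b} (\<lambda>x. g x * G x) = 0"
    using assms cg by (subst integral_add[symmetric])
      (auto intro!: integrable_continuous_real continuous_intros simp: integral_unique)
  then show ?thesis by linarith
qed

lemma gronwall_exp_bound:
  fixes f f' :: "real \<Rightarrow> real"
  assumes "0 \<le> t" "continuous_on {0..t} f"
    and "\<And>s. 0 < s \<Longrightarrow> s < t \<Longrightarrow> (f has_real_derivative f' s) (at s)"
    and "\<And>s. 0 < s \<Longrightarrow> s < t \<Longrightarrow> f' s \<le> K * f s"
  shows "f t \<le> f 0 * exp (K * t)"
proof -
  have "f t * exp (- K * t) \<le> f 0 * exp (- K * 0)"
  proof (rule DERIV_nonpos_imp_decreasing_open[OF assms(1)])
    fix s assume s: "0 < s" "s < t"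
    have "((\<lambda>s. f s * exp (- K * s)) has_real_derivative (f' s - K * f s) * exp (- K * s)) (at s)"
      using assms(3)[OF s] by (auto intro!: derivative_eq_intros simp: algebra_simps)
    moreover have "(f' s - K * f s) * exp (- K * s) \<le> 0"
      using assms(4)[OF s] by (simp add: mult_nonpos_nonneg)
    ultimately show "\<exists>y. ((\<lambda>s. f s * exp (- K * s)) has_real_derivative y) (at s) \<and> y \<le> 0"
      by blast
  qed (use assms(2) in \<open>auto intro!: continuous_intros\<close>)
  then show ?thesis
    by (simp add: exp_minus field_simps)
qed

lemma abs_diff_le_integral_abs_deriv:
  fixes f f' :: "real \<Rightarrow> real"
  assumes f: "\<And>z. z \<in> {a..b} \<Longrightarrow> (f has_real_derivative f' z) (at z within {a..b})"
    and "continuous_on {a..b} f'" "x \<in> {a..b}" "y \<in> {a..b}"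
  shows "\<bar>f x - f y\<bar> \<le> integral {a..b} (\<lambda>z. \<bar>f' z\<bar>)"
proof -
  have "\<bar>f r - f l\<bar> \<le> integral {a..b} (\<lambda>z. \<bar>f' z\<bar>)"
    if lr: "l \<le> r" "l \<in> {a..b}" "r \<in> {a..b}" for l r
  proof -
    have sub: "{l..r} \<subseteq> {a..b}"
      using lr by auto
    have "(f' has_integral (f r - f l)) {l..r}"
      using lr(1) f sub
      by (intro fundamental_theorem_of_calculus)
        (auto simp: has_real_derivative_iff_has_vector_derivative[symmetric] intro: DERIV_subset[OF _ sub])
    then have "\<bar>f r - f l\<bar> = \<bar>integral {l..r} f'\<bar>"
      by (simp add: integral_unique)
    also have "\<dots> \<le> integral {l..r} (\<lambda>z. \<bar>f' z\<bar>)"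
      using continuous_on_subset[OF assms(2) sub]
      by (intro integral_norm_bound_integral[where 'a=real, simplified])
        (auto intro!: integrable_continuous_real continuous_intros)
    also have "\<dots> \<le> integral {a..b} (\<lambda>z. \<bar>f' z\<bar>)"
      using assms(2) sub
      by (intro integral_subset_le) (auto intro!: integrable_continuous_real continuous_intros
          intro: continuous_on_subset)
    finally show ?thesis .
  qed
  from this[of x y] this[of y x] assms(3,4) show ?thesis
    by (cases "x \<le> y") (auto simp: abs_minus_commute)
qed

lemma Linf_le_mean_plus_energy:
  fixes f f' :: "real \<Rightarrow> real"
  assumes "a < b"
    and f: "\<And>x. x \<in> {a..b} \<Longrightarrow> (f has_real_derivative f' x) (at x within {a..b})"
    and "continuous_on {a..b} f'" "\<And>x. x \<in> {a..b} \<Longrightarrow> 0 \<le> f x"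
  shows "Linf a b f \<le> integral {a..b} f / (b - a) + (b - a) / 2 + integral {a..b} (\<lambda>x. (f' x)\<^sup>2) / 2"
proof -
  have cf: "continuous_on {a..b} f"
    using f by (rule DERIV_continuous_on)
  obtain y where y: "y \<in> {a..b}" "\<And>z. z \<in> {a..b} \<Longrightarrow> f y \<le> f z"
    using continuous_attains_inf[OF compact_Icc _ cf] \<open>a < b\<close> by auto
  have "(b - a) * f y \<le> integral {a..b} f"
    using integral_le[of "\<lambda>_. f y" "{a..b}" f] y cf \<open>a < b\<close>
    by (auto intro: integrable_continuous_real)
  then have min_le_mean: "f y \<le> integral {a..b} f / (b - a)"
    using \<open>a < b\<close> by (simp add: field_simps)
  have "integral {a..b} (\<lambda>x. \<bar>f' x\<bar>) \<le> integral {a..b} (\<lambda>x. 1 / 2 + (f' x)\<^sup>2 / 2)"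
  proof (rule integral_le)
    fix x
    have "0 \<le> (\<bar>f' x\<bar> - 1)\<^sup>2" by simp
    then show "\<bar>f' x\<bar> \<le> 1 / 2 + (f' x)\<^sup>2 / 2"
      by (simp add: power2_eq_square algebra_simps)
  qed (use assms(3) in \<open>auto intro!: integrable_continuous_real continuous_intros\<close>)
  also have "\<dots> = (b - a) / 2 + integral {a..b} (\<lambda>x. (f' x)\<^sup>2) / 2"
    using assms(1,3)
    by (subst integral_add) (auto intro!: integrable_continuous_real continuous_intros)
  finally have variation: "integral {a..b} (\<lambda>x. \<bar>f' x\<bar>) \<le> (b - a) / 2 + integral {a..b} (\<lambda>x. (f' x)\<^sup>2) / 2" .
  have "\<bar>f x\<bar> \<le> integral {a..b} f / (b - a) + (b - a) / 2 + integral {a..b} (\<lambda>x. (f' x)\<^sup>2) / 2"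
    if "x \<in> {a..b}" for x
    using abs_diff_le_integral_abs_deriv[OF f assms(3) that y(1)] assms(4)[OF that]
      min_le_mean variation by linarith
  then show ?thesis
    unfolding Linf_def using \<open>a < b\<close> by (intro cSUP_least) auto
qed

lemma diff_eq_integral_segment:
  fixes f f' :: "real \<Rightarrow> real"
  assumes "convex S" "s \<in> S" "t \<in> S" "\<And>r. r \<in> S \<Longrightarrow> (f has_real_derivative f' r) (at r)"
  shows "f s - f t = (s - t) * integral {0..1} (\<lambda>\<theta>. f' (t + \<theta> * (s - t)))"
proof -
  have seg: "t + \<theta> * (s - t) \<in> S" if "\<theta> \<in> {0..1}" for \<theta>
    using convexD_alt[OF assms(1,3,2), of \<theta>] that by (simp add: algebra_simps)
  have "((\<lambda>\<theta>. f' (t + \<theta> * (s - t)) * (s - t)) has_integral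
          f (t + 1 * (s - t)) - f (t + 0 * (s - t))) {0..1}"
  proof (rule fundamental_theorem_of_calculus)
    fix \<theta> :: real assume "\<theta> \<in> {0..1}"
    then have "((\<lambda>\<theta>. f (t + \<theta> * (s - t))) has_real_derivative f' (t + \<theta> * (s - t)) * (s - t)) (at \<theta>)"
      using assms(4)[OF seg] by (auto intro!: derivative_eq_intros DERIV_chain2[of f])
    then show "((\<lambda>\<theta>. f (t + \<theta> * (s - t))) has_vector_derivative f' (t + \<theta> * (s - t)) * (s - t))
                 (at \<theta> within {0..1})"
      by (simp add: has_real_derivative_iff_has_vector_derivative[symmetric] has_field_derivative_at_within)
  qed simp
  from integral_unique[OF this] show ?thesis
    by (simp add: mult.commute)
qed

lemma continuous_on_segment_average:
  fixes g :: "'a::topological_space \<Rightarrow> real \<Rightarrow> real"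
  assumes "convex S" "t \<in> S" "continuous_on (A \<times> S) (\<lambda>(x, s). g x s)"
  shows "continuous_on (A \<times> S) (\<lambda>(x, s). integral {0..1} (\<lambda>\<theta>. g x (t + \<theta> * (s - t))))"
proof -
  have seg: "t + \<theta> * (s - t) \<in> S" if "s \<in> S" "\<theta> \<in> {0..1}" for s \<theta>
    using convexD_alt[OF assms(1,2) that(1), of \<theta>] that(2) by (simp add: algebra_simps)
  have "continuous_on ((A \<times> S) \<times> cbox 0 1) (\<lambda>(p, \<theta>). g (fst p) (t + \<theta> * (snd p - t)))"
  proof -
    have "continuous_on ((A \<times> S) \<times> cbox 0 1) (\<lambda>q. (fst (fst q), t + snd q * (snd (fst q) - t)))"
      by (intro continuous_intros)
    moreover have "(\<lambda>q. (fst (fst q), t + snd q * (snd (fst q) - t))) ` ((A \<times> S) \<times> cbox 0 1) \<subseteq> A \<times> S"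
      using seg by auto
    ultimately show ?thesis
      using continuous_on_compose2[OF assms(3)] by (fastforce simp: case_prod_unfold)
  qed
  from integral_continuous_on_param[OF this] show ?thesis
    by (simp add: case_prod_unfold)
qed

lemma integral_deriv_square_diff:
  fixes f g f' g' f'' g'' :: "real \<Rightarrow> real"
  assumes "a \<le> b"
    and "\<And>x. x \<in> {a..b} \<Longrightarrow> (f has_real_derivative f' x) (at x within {a..b})"
    and "\<And>x. x \<in> {a..b} \<Longrightarrow> (g has_real_derivative g' x) (at x within {a..b})"
    and f': "\<And>x. x \<in> {a..b} \<Longrightarrow> (f' has_real_derivative f'' x) (at x within {a..b})"
    and g': "\<And>x. x \<in> {a..b} \<Longrightarrow> (g' has_real_derivative g'' x) (at x within {a..b})"
    and "continuous_on {a..b} f''" "continuous_on {a..b} g''"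
    and "f' a = 0" "f' b = 0" "g' a = 0" "g' b = 0"
  shows "integral {a..b} (\<lambda>x. (f' x)\<^sup>2) - integral {a..b} (\<lambda>x. (g' x)\<^sup>2)
           = - integral {a..b} (\<lambda>x. (f x - g x) * (f'' x + g'' x))"
proof -
  have cf': "continuous_on {a..b} f'" and cg': "continuous_on {a..b} g'"
    using f' g' by (metis DERIV_continuous_on)+
  have "integral {a..b} (\<lambda>x. (f x - g x) * (f'' x + g'' x))
      = - integral {a..b} (\<lambda>x. (f' x - g' x) * (f' x + g' x))"
  proof (rule integral_by_parts_vanishing_ends)
    fix x assume "x \<in> {a<..<b}"
    then show "((\<lambda>x. f' x + g' x) has_real_derivative f'' x + g'' x) (at x)"
      using f'[of x] g'[of x] at_within_Icc_at[of a x b] by (auto intro!: derivative_eq_intros)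
  qed (use assms cf' cg' in \<open>auto intro!: derivative_eq_intros continuous_intros\<close>)
  also have "\<dots> = - (integral {a..b} (\<lambda>x. (f' x)\<^sup>2) - integral {a..b} (\<lambda>x. (g' x)\<^sup>2))"
    using cf' cg'
    by (subst integral_diff[symmetric])
      (auto intro!: integrable_continuous_real continuous_intros integral_cong
        simp: power2_eq_square algebra_simps)
  finally show ?thesis
    by simp
qed

lemma has_real_derivative_integral_square:
  fixes w wx wxx wt :: "real \<Rightarrow> real \<Rightarrow> real"
  assumes "a \<le> b" "open S" "convex S" "t \<in> S"
    and dx: "\<And>s x. s \<in> S \<Longrightarrow> x \<in> {a..b} \<Longrightarrow> ((\<lambda>y. w y s) has_real_derivative wx x s) (at x within {a..b})"
    and dxx: "\<And>s x. s \<in> S \<Longrightarrow> x \<in> {a..b} \<Longrightarrow> ((\<lambda>y. wx y s) has_real_derivative wxx x s) (at x within {a..b})"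
    and dt: "\<And>s x. s \<in> S \<Longrightarrow> x \<in> {a..b} \<Longrightarrow> ((\<lambda>s. w x s) has_real_derivative wt x s) (at s)"
    and cxx: "continuous_on ({a..b} \<times> S) (\<lambda>(x, s). wxx x s)"
    and ct: "continuous_on ({a..b} \<times> S) (\<lambda>(x, s). wt x s)"
    and bc: "\<And>s. s \<in> S \<Longrightarrow> wx a s = 0" "\<And>s. s \<in> S \<Longrightarrow> wx b s = 0"
  shows "((\<lambda>s. integral {a..b} (\<lambda>x. (wx x s)\<^sup>2)) has_real_derivative
           -2 * integral {a..b} (\<lambda>x. wxx x t * wt x t)) (at t)"
proof -
  define I where "I s = integral {a..b} (\<lambda>x. (wx x s)\<^sup>2)" for s
  \<comment> \<open>Only \<open>w\<close> is differentiable in time: \<open>w x s - w x t = (s - t) * Q x s\<close>, and the joint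
    continuity of this mean of \<open>wt\<close> replaces a uniform estimate of difference quotients.\<close>
  define Q where "Q x s = integral {0..1} (\<lambda>\<theta>. wt x (t + \<theta> * (s - t)))" for x s
  define G where "G s = - integral {a..b} (\<lambda>x. Q x s * (wxx x s + wxx x t))" for s
  have cwxx: "continuous_on {a..b} (\<lambda>x. wxx x s)" if "s \<in> S" for s
    using cxx that by (rule continuous_on_slice)
  have cwxx_t: "continuous_on ({a..b} \<times> S) (\<lambda>(x, s). wxx x t)"
    using continuous_on_compose2[OF cwxx[OF \<open>t \<in> S\<close>] continuous_on_fst[OF continuous_on_id],
        of "{a..b} \<times> S"]
    by (auto simp: case_prod_unfold)
  have "continuous_on ({a..b} \<times> S) (\<lambda>(x, s). Q x s * (wxx x s + wxx x t))"
    using continuous_on_segment_average[OF assms(3,4) ct] cxx cwxx_t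
    unfolding Q_def case_prod_unfold by (intro continuous_intros)
  then have "continuous_on S G"
    unfolding G_def by (intro continuous_intros continuous_on_integral_param)
  then have "isCont G t"
    using assms(2,4) continuous_on_eq_continuous_at by blast
  have quotient: "I s - I t = G s * (s - t)" if s: "s \<in> S" for s
  proof -
    have "I s - I t = - integral {a..b} (\<lambda>x. (w x s - w x t) * (wxx x s + wxx x t))"
      unfolding I_def using assms(1) s \<open>t \<in> S\<close> bc
      by (intro integral_deriv_square_diff dx dxx cwxx) auto
    also have "\<dots> = - integral {a..b} (\<lambda>x. (s - t) * (Q x s * (wxx x s + wxx x t)))"
      unfolding Q_def using diff_eq_integral_segment[OF assms(3) s \<open>t \<in> S\<close> dt]
      by (intro arg_cong[where f = uminus] integral_cong) simp
    also have "\<dots> = G s * (s - t)"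
      unfolding G_def by simp
    finally show ?thesis .
  qed
  have "((\<lambda>s. (I s - I t) / (s - t)) \<longlongrightarrow> G t) (at t)"
  proof (rule Lim_transform_eventually)
    show "(G \<longlongrightarrow> G t) (at t)"
      using \<open>isCont G t\<close> by (simp add: isCont_def)
    show "\<forall>\<^sub>F s in at t. G s = (I s - I t) / (s - t)"
      using eventually_at_in_open[OF assms(2,4)] by eventually_elim (simp add: quotient)
  qed
  moreover have "G t = -2 * integral {a..b} (\<lambda>x. wxx x t * wt x t)"
    unfolding G_def Q_def by (simp add: algebra_simps)
  ultimately show ?thesis
    unfolding I_def[symmetric] has_field_derivative_iff by simp
qed

section \<open>Elementary inequalities\<close>

lemma quadratic_form_nonneg:
  fixes A B C X Y :: real
  assumes "0 < A" "B\<^sup>2 \<le> 4 * A * C"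
  shows "0 \<le> A * X\<^sup>2 + B * X * Y + C * Y\<^sup>2"
proof -
  have "4 * A * (A * X\<^sup>2 + B * X * Y + C * Y\<^sup>2) = (2 * A * X + B * Y)\<^sup>2 + (4 * A * C - B\<^sup>2) * Y\<^sup>2"
    by (simp add: algebra_simps power2_eq_square)
  also have "\<dots> \<ge> 0"
    using assms by (intro add_nonneg_nonneg mult_nonneg_nonneg) auto
  finally show ?thesis
    using assms(1) by (simp add: zero_le_mult_iff)
qed

lemma powr_le_square_plus_cube:
  fixes P e :: real
  assumes "0 < P" "2 \<le> e" "e \<le> 3"
  shows "P powr e \<le> P\<^sup>2 + P ^ 3"
proof (cases "P \<le> 1")
  case True
  then have "P powr e \<le> P powr 2"
    using assms by (intro powr_mono') auto
  then show ?thesis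
    using assms by (intro add_increasing2) (auto simp: powr_numeral)
next
  case False
  then have "P powr e \<le> P powr 3"
    using assms by (intro powr_mono) auto
  then show ?thesis
    using assms by (intro add_increasing) (auto simp: powr_numeral)
qed

text \<open>
  Young's inequality; \<open>P powr (4 - n) \<le> P\<^sup>2 + P ^ 3\<close> turns the ratio of the two coefficients
  into \<open>1 + P\<close>.
\<close>

lemma chemotaxis_absorbed_by_thin_film:
  fixes P X Y eps chi n :: real
  assumes P: "0 < P" and eps: "0 < eps" and n: "1 \<le> n" "n \<le> 2"
  shows "X * (- eps * (P ^ 4 / (P powr (4 - n) + eps)) * X
              - chi * (P powr (5 - n) / (P powr (4 - n) + eps)) * Y)
         \<le> chi\<^sup>2 / (2 * eps) * (1 + P) * Y\<^sup>2"
proof -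
  define s where "s = P powr (4 - n)"
  define d where "d = s + eps"
  have "0 < s" "0 < d"
    using P eps by (auto simp: s_def d_def intro: add_pos_pos)
  have P5: "P powr (5 - n) = P * s"
    unfolding s_def using P powr_add[of P 1 "4 - n"] by simp
  have "(chi * (P * s / d))\<^sup>2 = chi\<^sup>2 * P\<^sup>2 * s * (s / d) / d"
    by (simp add: power2_eq_square)
  also have "\<dots> \<le> chi\<^sup>2 * P\<^sup>2 * (P\<^sup>2 + P ^ 3) * 1 / d"
    using \<open>0 < s\<close> \<open>0 < d\<close> P powr_le_square_plus_cube[OF P, of "4 - n"] n
    by (intro divide_right_mono mult_mono) (auto simp: s_def d_def eps less_imp_le)
  also have "\<dots> \<le> 2 * (chi\<^sup>2 * P\<^sup>2 * (P\<^sup>2 + P ^ 3) * 1 / d)"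
    using \<open>0 < d\<close> P zero_le_power2[of chi] by (simp add: field_simps)
  also have "\<dots> = 4 * (eps * (P ^ 4 / d)) * (chi\<^sup>2 / (2 * eps) * (1 + P))"
    using eps \<open>0 < d\<close> by (simp add: field_simps power2_eq_square power3_eq_cube power4_eq_xxxx)
  finally have "0 \<le> eps * (P ^ 4 / d) * X\<^sup>2 + chi * (P * s / d) * X * Y + chi\<^sup>2 / (2 * eps) * (1 + P) * Y\<^sup>2"
    using eps \<open>0 < d\<close> P by (intro quadratic_form_nonneg) auto
  then show ?thesis
    unfolding P5 d_def[symmetric] s_def[symmetric] by (simp add: algebra_simps power2_eq_square)
qed

definition reaction_factor :: "real \<Rightarrow> real \<Rightarrow> real" where
  "reaction_factor eps P = 3 * P ^ 3 / (3 * P\<^sup>2 + eps)"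

definition reaction_factor_deriv :: "real \<Rightarrow> real \<Rightarrow> real" where
  "reaction_factor_deriv eps P = (9 * P ^ 4 + 9 * eps * P\<^sup>2) / (3 * P\<^sup>2 + eps)\<^sup>2"

lemma reacU_eq: "reacU eps lam aa P Q = reaction_factor eps P * (lam - P + aa * Q)"
  unfolding reacU_def reaction_factor_def by simp

lemma reacV_eq: "reacV eps lam aa Q P = reaction_factor eps P * (lam - P - aa * Q)"
  unfolding reacV_def reaction_factor_def by simp

lemma has_real_derivative_reaction_factor:
  assumes "0 < eps" "(f has_real_derivative f') (at x within S)"
  shows "((\<lambda>y. reaction_factor eps (f y)) has_real_derivative reaction_factor_deriv eps (f x) * f')
           (at x within S)"
proof -
  have "0 < 3 * (f x)\<^sup>2 + eps"
    using assms by (simp add: add_nonneg_pos)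
  with assms show ?thesis
    unfolding reaction_factor_def reaction_factor_deriv_def
    by (auto intro!: derivative_eq_intros simp: field_simps power2_eq_square power4_eq_xxxx power3_eq_cube)
qed

lemma continuous_on_reaction_factor:
  "continuous_on S p \<Longrightarrow> 0 < eps \<Longrightarrow> continuous_on S (\<lambda>x. reaction_factor eps (p x))"
  unfolding reaction_factor_def by (intro continuous_intros) (smt (verit) zero_le_power2)+

lemma continuous_on_reaction_factor_deriv:
  "continuous_on S p \<Longrightarrow> 0 < eps \<Longrightarrow> continuous_on S (\<lambda>x. reaction_factor_deriv eps (p x))"
  unfolding reaction_factor_deriv_def by (intro continuous_intros) (smt (verit) zero_le_power2 power_eq_0_iff)+

lemma reaction_factor_bounds:
  assumes "0 \<le> P" "0 < eps"
  shows "0 \<le> reaction_factor eps P" "reaction_factor eps P \<le> P"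
proof -
  have "3 * P ^ 3 \<le> P * (3 * P\<^sup>2 + eps)"
    using assms by (simp add: algebra_simps power3_eq_cube power2_eq_square)
  with assms show "0 \<le> reaction_factor eps P" "reaction_factor eps P \<le> P"
    unfolding reaction_factor_def by (auto simp: divide_le_eq add_nonneg_pos)
qed

lemma reaction_factor_ge:
  assumes "0 \<le> P" "0 < eps" "eps \<le> 1"
  shows "P - 1 \<le> reaction_factor eps P"
proof -
  have d: "0 < 3 * P\<^sup>2 + eps"
    using assms by (simp add: add_nonneg_pos)
  have "P * eps \<le> 3 * P\<^sup>2 + eps"
  proof (cases "P \<le> 1")
    case True
    then have "P * eps \<le> eps"
      using assms mult_right_mono[of P 1 eps] by simp
    then show ?thesis
      using zero_le_power2[of P] by linarith
  next
    case False
    then have "P * eps \<le> P * P"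
      using assms by (intro mult_left_mono) auto
    then show ?thesis
      unfolding power2_eq_square using assms zero_le_square[of P] by linarith
  qed
  then have "P * eps / (3 * P\<^sup>2 + eps) \<le> 1"
    using d by simp
  moreover have "P - reaction_factor eps P = P * eps / (3 * P\<^sup>2 + eps)"
    using d unfolding reaction_factor_def by (simp add: field_simps power2_eq_square power3_eq_cube)
  ultimately show ?thesis
    by linarith
qed

lemma reaction_factor_deriv_bounds:
  assumes "0 < eps"
  shows "0 \<le> reaction_factor_deriv eps P" "reaction_factor_deriv eps P \<le> 3"
proof -
  have "0 \<le> 18 * P ^ 4 + 9 * eps * P\<^sup>2 + 3 * eps\<^sup>2"
    using assms by (intro add_nonneg_nonneg) auto
  then have "9 * P ^ 4 + 9 * eps * P\<^sup>2 \<le> 3 * (3 * P\<^sup>2 + eps)\<^sup>2"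
    by (simp add: algebra_simps power2_eq_square power4_eq_xxxx)
  with assms show "0 \<le> reaction_factor_deriv eps P" "reaction_factor_deriv eps P \<le> 3"
    unfolding reaction_factor_deriv_def by (auto simp: divide_le_eq add_nonneg_pos)
qed

lemma abs_mult_le_sum_squares:
  fixes X Y :: real
  shows "\<bar>X\<bar> * \<bar>Y\<bar> \<le> X\<^sup>2 + Y\<^sup>2"
proof -
  have "2 * \<bar>X\<bar> * \<bar>Y\<bar> \<le> X\<^sup>2 + Y\<^sup>2"
    using sum_squares_bound[of "\<bar>X\<bar>" "\<bar>Y\<bar>"] by simp
  moreover have "0 \<le> \<bar>X\<bar> * \<bar>Y\<bar>"
    by simp
  ultimately show ?thesis
    by linarith
qed

lemma abs_mult_young:
  fixes X Y d :: real
  assumes "0 < d"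
  shows "2 * \<bar>X * Y\<bar> \<le> d * Y\<^sup>2 + X\<^sup>2 / d"
proof -
  have "0 \<le> (d * \<bar>Y\<bar> - \<bar>X\<bar>)\<^sup>2 / d"
    using assms by simp
  also have "\<dots> = d * Y\<^sup>2 + X\<^sup>2 / d - 2 * \<bar>X * Y\<bar>"
    using assms by (simp add: field_simps power2_eq_square abs_mult)
  finally show ?thesis
    by simp
qed

lemma reaction_cross_term_le:
  assumes "0 \<le> P" "0 < eps" "0 \<le> aa" "Z \<le> \<bar>X\<bar> * \<bar>Y\<bar>"
  shows "reaction_factor eps P * aa * Z \<le> aa * P * (X\<^sup>2 + Y\<^sup>2)"
proof -
  note r = reaction_factor_bounds[OF assms(1,2)]
  have "reaction_factor eps P * aa * Z \<le> reaction_factor eps P * aa * (\<bar>X\<bar> * \<bar>Y\<bar>)"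
    using assms r by (intro mult_left_mono) auto
  also have "\<dots> \<le> P * aa * (X\<^sup>2 + Y\<^sup>2)"
    using assms r abs_mult_le_sum_squares[of X Y] by (intro mult_mono) auto
  finally show ?thesis
    by (simp add: mult.commute)
qed

lemma reacU_gradient_le:
  assumes "0 \<le> P" "0 \<le> Q" "0 < eps" "0 \<le> lam" "0 \<le> aa"
  shows "X * (reaction_factor_deriv eps P * X * (lam - P + aa * Q) + reaction_factor eps P * (- X + aa * Y))
           \<le> (3 * lam + 3 * aa * Q + aa * P) * (X\<^sup>2 + Y\<^sup>2)"
proof -
  note r = reaction_factor_bounds[OF assms(1,3)] and r' = reaction_factor_deriv_bounds[OF assms(3)]
  have "reaction_factor_deriv eps P * (lam - P + aa * Q) \<le> reaction_factor_deriv eps P * (lam + aa * Q)"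
    using assms r' by (intro mult_left_mono) auto
  also have "\<dots> \<le> 3 * (lam + aa * Q)"
    using assms r' by (intro mult_right_mono) auto
  finally have "reaction_factor_deriv eps P * (lam - P + aa * Q) * X\<^sup>2 \<le> 3 * (lam + aa * Q) * (X\<^sup>2 + Y\<^sup>2)"
    by (rule mult_mono) (use assms in auto)
  moreover have "reaction_factor eps P * aa * (X * Y) \<le> aa * P * (X\<^sup>2 + Y\<^sup>2)"
    using assms by (intro reaction_cross_term_le) (auto simp flip: abs_mult)
  moreover have "0 \<le> reaction_factor eps P * X\<^sup>2"
    using r by simp
  ultimately show ?thesis
    by (simp add: algebra_simps power2_eq_square)
qed

lemma reacV_gradient_le:
  assumes "0 \<le> P" "0 \<le> Q" "0 < eps" "0 \<le> lam" "0 \<le> aa"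
  shows "X * (reaction_factor_deriv eps P * X * (lam - P - aa * Q) + reaction_factor eps P * (- X - aa * Y))
           \<le> (3 * lam + aa * P) * (X\<^sup>2 + Y\<^sup>2)"
proof -
  note r = reaction_factor_bounds[OF assms(1,3)] and r' = reaction_factor_deriv_bounds[OF assms(3)]
  have "0 \<le> aa * Q"
    using assms by simp
  then have "lam - P - aa * Q \<le> lam"
    using assms by linarith
  then have "reaction_factor_deriv eps P * (lam - P - aa * Q) \<le> reaction_factor_deriv eps P * lam"
    using r'(1) by (rule mult_left_mono)
  also have "\<dots> \<le> 3 * lam"
    using assms r' by (intro mult_right_mono) auto
  finally have "reaction_factor_deriv eps P * (lam - P - aa * Q) * X\<^sup>2 \<le> 3 * lam * (X\<^sup>2 + Y\<^sup>2)"
    by (rule mult_mono) (use assms in auto)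
  moreover have "reaction_factor eps P * aa * (- (X * Y)) \<le> aa * P * (X\<^sup>2 + Y\<^sup>2)"
    using assms by (intro reaction_cross_term_le) (auto simp flip: abs_mult)
  moreover have "0 \<le> reaction_factor eps P * X\<^sup>2"
    using r by simp
  ultimately show ?thesis
    by (simp add: algebra_simps power2_eq_square)
qed

text \<open>
  With the weight \<open>a1 / a2\<close> the competition terms reduce to
  \<open>a1 P (Q - reaction_factor eps Q) \<le> a1 P\<close>.
\<close>

lemma reaction_mass_le:
  assumes "0 \<le> P" "0 \<le> Q" "0 < eps" "eps \<le> 1" "0 \<le> lam1" "0 \<le> lam2" "0 \<le> a1" "0 < a2"
  shows "reaction_factor eps P * (lam1 - P + a1 * Q) + a1 / a2 * (reaction_factor eps Q * (lam2 - Q - a2 * P))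
           \<le> (lam1 + a1 + lam2) * (P + a1 / a2 * Q)"
proof -
  note rP = reaction_factor_bounds[OF assms(1,3)] and rQ = reaction_factor_bounds[OF assms(2,3)]
  define c where "c = a1 / a2"
  have "0 \<le> c" "c * a2 = a1"
    using assms by (auto simp: c_def)
  have "reaction_factor eps P * (lam1 - P + a1 * Q) \<le> reaction_factor eps P * (lam1 + a1 * Q)"
    using assms rP by (intro mult_left_mono) auto
  also have "\<dots> \<le> P * (lam1 + a1 * Q)"
    using assms rP by (intro mult_right_mono) auto
  finally have "reaction_factor eps P * (lam1 - P + a1 * Q) \<le> P * lam1 + a1 * P * Q"
    by (simp add: algebra_simps)
  moreover have "c * (reaction_factor eps Q * (lam2 - Q - a2 * P))
      = c * (reaction_factor eps Q * lam2) - c * (reaction_factor eps Q * Q) - a1 * P * reaction_factor eps Q"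
    unfolding \<open>c * a2 = a1\<close>[symmetric] by (simp add: algebra_simps)
  moreover have "c * (reaction_factor eps Q * lam2) \<le> c * (Q * lam2)"
    using assms rQ \<open>0 \<le> c\<close> by (intro mult_left_mono mult_right_mono) auto
  moreover have "a1 * P * Q - a1 * P * reaction_factor eps Q \<le> a1 * P"
    using assms reaction_factor_ge[OF assms(2-4)] mult_left_mono[of "Q - reaction_factor eps Q" 1 "a1 * P"]
    by (simp add: algebra_simps)
  moreover have "0 \<le> c * (reaction_factor eps Q * Q)"
    using assms rQ \<open>0 \<le> c\<close> by simp
  ultimately have "reaction_factor eps P * (lam1 - P + a1 * Q) + c * (reaction_factor eps Q * (lam2 - Q - a2 * P))
      \<le> P * lam1 + c * (Q * lam2) + a1 * P"
    by linarith
  also have "\<dots> \<le> (lam1 + a1 + lam2) * (P + c * Q)"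
    using assms \<open>0 \<le> c\<close> by (simp add: algebra_simps add_increasing)
  finally show ?thesis
    unfolding c_def .
qed

section \<open>A positive profile with Neumann data\<close>

locale neumann_profile =
  fixes a b :: real and p px pxx pxxx :: "real \<Rightarrow> real"
  assumes ab: "a < b"
    and p_deriv: "\<And>x. x \<in> {a..b} \<Longrightarrow> (p has_real_derivative px x) (at x within {a..b})"
    and px_deriv: "\<And>x. x \<in> {a..b} \<Longrightarrow> (px has_real_derivative pxx x) (at x within {a..b})"
    and pxx_deriv: "\<And>x. x \<in> {a..b} \<Longrightarrow> (pxx has_real_derivative pxxx x) (at x within {a..b})"
    and continuous_pxxx: "continuous_on {a..b} pxxx"
    and positive: "\<And>x. x \<in> {a..b} \<Longrightarrow> 0 < p x"
    and px_a: "px a = 0" and px_b: "px b = 0"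
begin

lemma continuous_p: "continuous_on {a..b} p"
  using p_deriv by (rule DERIV_continuous_on)

lemma continuous_px: "continuous_on {a..b} px"
  using px_deriv by (rule DERIV_continuous_on)

lemma continuous_pxx: "continuous_on {a..b} pxx"
  using pxx_deriv by (rule DERIV_continuous_on)

lemma continuous_powr: "continuous_on {a..b} (\<lambda>x. p x powr r)"
  using continuous_p positive by (intro continuous_intros) (auto simp: less_imp_neq[symmetric])

lemmas continuous_profile = continuous_p continuous_px continuous_pxx continuous_pxxx continuous_powr

lemma integral_mult_pxx:
  assumes "\<And>x. x \<in> {a..b} \<Longrightarrow> (R has_real_derivative R' x) (at x within {a..b})"
    and "continuous_on {a..b} R'"
  shows "integral {a..b} (\<lambda>x. R x * pxx x) = - integral {a..b} (\<lambda>x. R' x * px x)"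
proof (rule integral_by_parts_vanishing_ends)
  fix x assume "x \<in> {a<..<b}"
  then show "(px has_real_derivative pxx x) (at x)"
    using px_deriv[of x] at_within_Icc_at[of a x b] by auto
qed (use ab assms continuous_profile px_a px_b in auto)

lemma integral_px_pxxx: "integral {a..b} (\<lambda>x. px x * pxxx x) = - integral {a..b} (\<lambda>x. (pxx x)\<^sup>2)"
  using integral_mult_pxx[OF pxx_deriv continuous_pxxx]
  by (simp add: power2_eq_square mult.commute)

lemma powr_split:
  assumes "x \<in> {a..b}"
  shows "p x powr (r - 1) = p x powr (r - 2) * p x" "p x powr r = p x powr (r - 2) * (p x)\<^sup>2"
  using positive[OF assms] powr_add[of "p x" "r - 2" 1] powr_add[of "p x" "r - 2" 2]
  by (simp_all add: powr_numeral)

lemma integral_powr_pxx_square: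
  "integral {a..b} (\<lambda>x. p x powr (-al) * (pxx x)\<^sup>2)
     = al * integral {a..b} (\<lambda>x. p x powr (-al - 1) * (px x)\<^sup>2 * pxx x)
       - integral {a..b} (\<lambda>x. p x powr (-al) * px x * pxxx x)"
proof -
  have "integral {a..b} (\<lambda>x. p x powr (-al) * pxx x * pxx x)
      = - integral {a..b} (\<lambda>x. (-al * p x powr (-al - 1) * px x * pxx x + p x powr (-al) * pxxx x) * px x)"
  proof (rule integral_mult_pxx)
    fix x assume "x \<in> {a..b}"
    then show "((\<lambda>x. p x powr (-al) * pxx x) has_real_derivative
                 -al * p x powr (-al - 1) * px x * pxx x + p x powr (-al) * pxxx x) (at x within {a..b})"
      using p_deriv[of x] pxx_deriv[of x] positive[of x] by (auto intro!: derivative_eq_intros)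
  qed (intro continuous_intros continuous_profile)
  also have "\<dots> = - integral {a..b} (\<lambda>x. (-al) * (p x powr (-al - 1) * (px x)\<^sup>2 * pxx x)
                                       + p x powr (-al) * px x * pxxx x)"
    by (simp add: algebra_simps power2_eq_square)
  also have "\<dots> = al * integral {a..b} (\<lambda>x. p x powr (-al - 1) * (px x)\<^sup>2 * pxx x)
                  - integral {a..b} (\<lambda>x. p x powr (-al) * px x * pxxx x)"
    by (subst integral_add) (auto intro!: integrable_continuous_real continuous_intros continuous_profile)
  finally show ?thesis
    by (simp add: power2_eq_square mult.assoc)
qed

lemma integral_powr_px_square_pxx:
  "3 * integral {a..b} (\<lambda>x. p x powr (-al - 1) * (px x)\<^sup>2 * pxx x)
     = (al + 1) * integral {a..b} (\<lambda>x. p x powr (-al - 2) * (px x) ^ 4)"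
proof -
  have "integral {a..b} (\<lambda>x. p x powr (-al - 1) * (px x)\<^sup>2 * pxx x)
      = - integral {a..b} (\<lambda>x. (-(al + 1) * p x powr (-al - 2) * px x * (px x)\<^sup>2
                                 + p x powr (-al - 1) * (2 * px x * pxx x)) * px x)"
  proof (rule integral_mult_pxx)
    fix x assume "x \<in> {a..b}"
    then show "((\<lambda>x. p x powr (-al - 1) * (px x)\<^sup>2) has_real_derivative
                 -(al + 1) * p x powr (-al - 2) * px x * (px x)\<^sup>2 + p x powr (-al - 1) * (2 * px x * pxx x))
                 (at x within {a..b})"
      using p_deriv[of x] px_deriv[of x] positive[of x]
      by (auto intro!: derivative_eq_intros simp: algebra_simps)
  qed (intro continuous_intros continuous_profile)
  also have "\<dots> = - integral {a..b} (\<lambda>x. 2 * (p x powr (-al - 1) * (px x)\<^sup>2 * pxx x)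
                                       - (al + 1) * (p x powr (-al - 2) * (px x) ^ 4))"
    by (intro arg_cong[where f = uminus] integral_cong)
      (simp add: algebra_simps power2_eq_square power4_eq_xxxx)
  also have "\<dots> = (al + 1) * integral {a..b} (\<lambda>x. p x powr (-al - 2) * (px x) ^ 4)
                  - 2 * integral {a..b} (\<lambda>x. p x powr (-al - 1) * (px x)\<^sup>2 * pxx x)"
    by (subst integral_diff) (auto intro!: integrable_continuous_real continuous_intros continuous_profile)
  finally show ?thesis
    by linarith
qed

lemma integral_powr_square_completion:
  "2 * lam * integral {a..b} (\<lambda>x. p x powr (-al - 1) * (px x)\<^sup>2 * pxx x)
     - lam\<^sup>2 * integral {a..b} (\<lambda>x. p x powr (-al - 2) * (px x) ^ 4)
     \<le> integral {a..b} (\<lambda>x. p x powr (-al) * (pxx x)\<^sup>2)"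
proof -
  have "0 \<le> integral {a..b} (\<lambda>x. p x powr (-al - 2) * (p x * pxx x - lam * (px x)\<^sup>2)\<^sup>2)"
    by (intro integral_nonneg integrable_continuous_real continuous_intros continuous_profile) auto
  also have "\<dots> = integral {a..b} (\<lambda>x. p x powr (-al) * (pxx x)\<^sup>2
                     - 2 * lam * (p x powr (-al - 1) * (px x)\<^sup>2 * pxx x)
                     + lam\<^sup>2 * (p x powr (-al - 2) * (px x) ^ 4))"
  proof (rule integral_cong)
    fix x assume "x \<in> {a..b}"
    from powr_split[OF this, of "-al"] show "p x powr (-al - 2) * (p x * pxx x - lam * (px x)\<^sup>2)\<^sup>2
        = p x powr (-al) * (pxx x)\<^sup>2 - 2 * lam * (p x powr (-al - 1) * (px x)\<^sup>2 * pxx x)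
          + lam\<^sup>2 * (p x powr (-al - 2) * (px x) ^ 4)"
      by (simp only:) (simp add: algebra_simps power2_eq_square power4_eq_xxxx)
  qed
  also have "\<dots> = integral {a..b} (\<lambda>x. p x powr (-al) * (pxx x)\<^sup>2)
                  - 2 * lam * integral {a..b} (\<lambda>x. p x powr (-al - 1) * (px x)\<^sup>2 * pxx x)
                  + lam\<^sup>2 * integral {a..b} (\<lambda>x. p x powr (-al - 2) * (px x) ^ 4)"
    by (subst integral_add integral_diff, (auto intro!: integrable_continuous_real continuous_intros continuous_profile)[2])+
      simp
  finally show ?thesis
    by linarith
qed

text \<open>
  A Bernis-type inequality: after the two integrations by parts above, completing the square bounds
  the integral by \<open>(lam * B) * (al - lam)\<close> with \<open>lam = (al + 1) / 3\<close>, which is where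
  \<open>al \<le> 1 / 2\<close> is needed.
\<close>

lemma integral_powr_px_pxxx_nonpos:
  assumes "-1 \<le> al" "al \<le> 1 / 2"
  shows "integral {a..b} (\<lambda>x. p x powr (-al) * px x * pxxx x) \<le> 0"
proof -
  define A where "A = integral {a..b} (\<lambda>x. p x powr (-al) * (pxx x)\<^sup>2)"
  define B where "B = integral {a..b} (\<lambda>x. p x powr (-al - 2) * (px x) ^ 4)"
  define C where "C = integral {a..b} (\<lambda>x. p x powr (-al - 1) * (px x)\<^sup>2 * pxx x)"
  define lam where "lam = (al + 1) / 3"
  have "0 \<le> B"
    unfolding B_def by (intro integral_nonneg integrable_continuous_real continuous_intros continuous_profile) auto
  have "C = lam * B"
    using integral_powr_px_square_pxx[of al] unfolding B_def C_def lam_def by simp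
  have "integral {a..b} (\<lambda>x. p x powr (-al) * px x * pxxx x) = al * C - A"
    using integral_powr_pxx_square[of al] unfolding A_def C_def by simp
  also have "\<dots> \<le> al * C - 2 * lam * C + lam\<^sup>2 * B"
    using integral_powr_square_completion[of lam al] unfolding A_def B_def C_def by simp
  also have "\<dots> = (lam * B) * (al - lam)"
    unfolding \<open>C = lam * B\<close> by (simp add: algebra_simps power2_eq_square)
  also have "\<dots> \<le> 0"
    using assms \<open>0 \<le> B\<close> unfolding lam_def by (intro mult_nonneg_nonpos) auto
  finally show ?thesis .
qed

lemma px_square_le_integral:
  assumes "x \<in> {a..b}"
  shows "(px x)\<^sup>2 \<le> integral {a..b} (\<lambda>y. 2 * \<bar>px y * pxx y\<bar>)"
proof -
  have "\<bar>(px x)\<^sup>2 - (px a)\<^sup>2\<bar> \<le> integral {a..b} (\<lambda>y. \<bar>2 * px y * pxx y\<bar>)"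
    using ab assms px_deriv
    by (intro abs_diff_le_integral_abs_deriv) (auto intro!: derivative_eq_intros continuous_intros continuous_profile)
  then show ?thesis
    using px_a by (simp add: abs_mult mult.assoc)
qed

lemma integral_px_pxx_young:
  assumes "0 < d"
  shows "integral {a..b} (\<lambda>y. 2 * \<bar>px y * pxx y\<bar>)
           \<le> d * integral {a..b} (\<lambda>y. (pxx y)\<^sup>2) + integral {a..b} (\<lambda>y. (px y)\<^sup>2) / d"
proof -
  have "integral {a..b} (\<lambda>y. 2 * \<bar>px y * pxx y\<bar>) \<le> integral {a..b} (\<lambda>y. d * (pxx y)\<^sup>2 + (px y)\<^sup>2 / d)"
    using assms abs_mult_young[OF assms] by (intro integral_le integrable_continuous_real continuous_intros continuous_profile) auto
  also have "\<dots> = d * integral {a..b} (\<lambda>y. (pxx y)\<^sup>2) + integral {a..b} (\<lambda>y. (px y)\<^sup>2) / d"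
    using assms by (subst integral_add) (auto intro!: integrable_continuous_real continuous_intros continuous_profile)
  finally show ?thesis .
qed

lemma continuous_on_fluxU:
  assumes "0 < eps" "continuous_on {a..b} qx"
  shows "continuous_on {a..b} (\<lambda>y. fluxU eps al D chi n (p y) (px y) (pxxx y) (qx y))"
proof -
  have "0 < p x powr (4 - n) + eps" if "x \<in> {a..b}" for x
    using positive[OF that] assms(1) by (simp add: add_pos_pos)
  then show ?thesis
    unfolding fluxU_def using assms(2) positive
    by (intro continuous_intros continuous_profile) (auto simp: less_imp_neq[symmetric])
qed

lemma fluxU_vanishes_at_ends:
  assumes "pxxx a = 0" "pxxx b = 0" "qx a = 0" "qx b = 0"
  shows "fluxU eps al D chi n (p a) (px a) (pxxx a) (qx a) = 0"
    and "fluxU eps al D chi n (p b) (px b) (pxxx b) (qx b) = 0"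
  using assms px_a px_b by (simp_all add: fluxU_def)

lemma has_integral_flux_derivative:
  assumes "0 < eps" "continuous_on {a..b} qx"
    and "pxxx a = 0" "pxxx b = 0" "qx a = 0" "qx b = 0"
    and "\<And>x. x \<in> {a<..<b} \<Longrightarrow>
           ((\<lambda>y. fluxU eps al D chi n (p y) (px y) (pxxx y) (qx y)) has_real_derivative G x) (at x)"
  shows "(G has_integral 0) {a..b}"
  using ab assms continuous_on_fluxU[OF assms(1,2)] fluxU_vanishes_at_ends[OF assms(3-6)]
  by (intro has_integral_derivative_vanishing_ends[where P = "\<lambda>y. fluxU eps al D chi n (p y) (px y) (pxxx y) (qx y)"])
    auto

lemma flux_dissipation:
  assumes eps: "0 < eps" and al: "0 \<le> al" "al \<le> 1 / 2" and n: "1 \<le> n" "n \<le> 2"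
    and qx: "continuous_on {a..b} qx" "qx a = 0" "qx b = 0"
    and pxxx: "pxxx a = 0" "pxxx b = 0"
    and G: "continuous_on {a..b} G"
    and flux: "\<And>x. x \<in> {a<..<b} \<Longrightarrow>
                 ((\<lambda>y. fluxU eps al D chi n (p y) (px y) (pxxx y) (qx y)) has_real_derivative G x) (at x)"
  shows "- integral {a..b} (\<lambda>x. pxx x * G x)
           \<le> - D * integral {a..b} (\<lambda>x. (pxx x)\<^sup>2) + chi\<^sup>2 / (2 * eps) * integral {a..b} (\<lambda>x. (1 + p x) * (qx x)\<^sup>2)"
proof -
  define F where "F y = fluxU eps al D chi n (p y) (px y) (pxxx y) (qx y)" for y
  define c where "c = chi\<^sup>2 / (2 * eps)"
  have cF: "continuous_on {a..b} F"
    unfolding F_def using eps qx(1) by (rule continuous_on_fluxU)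
  have "- integral {a..b} (\<lambda>x. pxx x * G x) = integral {a..b} (\<lambda>x. pxxx x * F x)"
    using integral_by_parts_vanishing_ends[of a b pxx pxxx F G] ab pxx_deriv continuous_pxxx cF G flux
      fluxU_vanishes_at_ends[OF pxxx qx(2,3)] unfolding F_def by simp
  also have "\<dots> \<le> integral {a..b} (\<lambda>x. eps powr (al / 2) * (p x powr (-al) * px x * pxxx x)
                                    + D * (px x * pxxx x) + c * ((1 + p x) * (qx x)\<^sup>2))"
  proof (rule integral_le)
    fix x assume "x \<in> {a..b}"
    have "pxxx x * F x = pxxx x * (- eps * (p x ^ 4 / (p x powr (4 - n) + eps)) * pxxx x
                           - chi * (p x powr (5 - n) / (p x powr (4 - n) + eps)) * qx x)
                         + eps powr (al / 2) * (p x powr (-al) * px x * pxxx x) + D * (px x * pxxx x)"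
      unfolding F_def fluxU_def by (simp add: algebra_simps)
    moreover have "pxxx x * (- eps * (p x ^ 4 / (p x powr (4 - n) + eps)) * pxxx x
                     - chi * (p x powr (5 - n) / (p x powr (4 - n) + eps)) * qx x)
                   \<le> c * ((1 + p x) * (qx x)\<^sup>2)"
      using chemotaxis_absorbed_by_thin_film[OF positive[OF \<open>x \<in> {a..b}\<close>] eps n, of "pxxx x" chi "qx x"]
      unfolding c_def by (simp add: mult.assoc)
    ultimately show "pxxx x * F x \<le> eps powr (al / 2) * (p x powr (-al) * px x * pxxx x)
                                + D * (px x * pxxx x) + c * ((1 + p x) * (qx x)\<^sup>2)"
      by linarith
  qed (use cF qx in \<open>auto intro!: integrable_continuous_real continuous_intros continuous_profile\<close>)
  also have "\<dots> = eps powr (al / 2) * integral {a..b} (\<lambda>x. p x powr (-al) * px x * pxxx x)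
                  + D * integral {a..b} (\<lambda>x. px x * pxxx x) + c * integral {a..b} (\<lambda>x. (1 + p x) * (qx x)\<^sup>2)"
    using qx by (subst integral_add, (auto intro!: integrable_continuous_real continuous_intros continuous_profile)[2])+ simp
  also have "\<dots> \<le> - D * integral {a..b} (\<lambda>x. (pxx x)\<^sup>2) + c * integral {a..b} (\<lambda>x. (1 + p x) * (qx x)\<^sup>2)"
    using integral_powr_px_pxxx_nonpos[of al] al integral_px_pxxx by (simp add: mult_nonneg_nonpos)
  finally show ?thesis
    unfolding c_def .
qed

end

section \<open>The system at a fixed time\<close>

lemma fluxV_eq_fluxU: "fluxV eps al D chi n w wx wxxx zx = fluxU eps al D (-chi) n w wx wxxx zx"
  unfolding fluxV_def fluxU_def by simp

locale system_slice =
  U: neumann_profile a b u ux uxx uxxx + V: neumann_profile a b v vx vxx vxxx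
  for a b :: real and u ux uxx uxxx v vx vxx vxxx :: "real \<Rightarrow> real" +
  fixes ut vt :: "real \<Rightarrow> real" and eps al n1 n2 D1 D2 chi1 chi2 lam1 lam2 a1 a2 :: real
  assumes eps: "0 < eps" "eps < 1" and al: "0 < al" "al \<le> 1 / 2"
    and n1: "1 \<le> n1" "n1 \<le> 2" and n2: "1 \<le> n2" "n2 \<le> 2"
    and pos: "0 < D1" "0 < D2" "0 < a1" "0 < a2" "0 < lam1" "0 < lam2"
    and uxxx_ends: "uxxx a = 0" "uxxx b = 0" and vxxx_ends: "vxxx a = 0" "vxxx b = 0"
    and continuous_ut: "continuous_on {a..b} ut" and continuous_vt: "continuous_on {a..b} vt"
    and pde_u: "\<And>x. x \<in> {a<..<b} \<Longrightarrow>
      ((\<lambda>y. fluxU eps al D1 chi1 n1 (u y) (ux y) (uxxx y) (vx y))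
         has_real_derivative (ut x - reacU eps lam1 a1 (u x) (v x))) (at x)"
    and pde_v: "\<And>x. x \<in> {a<..<b} \<Longrightarrow>
      ((\<lambda>y. fluxV eps al D2 chi2 n2 (v y) (vx y) (vxxx y) (ux y))
         has_real_derivative (vt x - reacV eps lam2 a2 (u x) (v x))) (at x)"
begin

definition "Ru x = reaction_factor eps (u x) * (lam1 - u x + a1 * v x)"
definition "Rv x = reaction_factor eps (v x) * (lam2 - v x - a2 * u x)"
definition "Rux x = reaction_factor_deriv eps (u x) * ux x * (lam1 - u x + a1 * v x)
                     + reaction_factor eps (u x) * (- ux x + a1 * vx x)"
definition "Rvx x = reaction_factor_deriv eps (v x) * vx x * (lam2 - v x - a2 * u x)
                     + reaction_factor eps (v x) * (- vx x - a2 * ux x)"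

lemma has_real_derivative_Ru:
  "x \<in> {a..b} \<Longrightarrow> (Ru has_real_derivative Rux x) (at x within {a..b})"
  unfolding Ru_def[abs_def] Rux_def
  using has_real_derivative_reaction_factor[OF eps(1) U.p_deriv] U.p_deriv V.p_deriv
  by (auto intro!: derivative_eq_intros simp: algebra_simps)

lemma has_real_derivative_Rv:
  "x \<in> {a..b} \<Longrightarrow> (Rv has_real_derivative Rvx x) (at x within {a..b})"
  unfolding Rv_def[abs_def] Rvx_def
  using has_real_derivative_reaction_factor[OF eps(1) V.p_deriv] U.p_deriv V.p_deriv
  by (auto intro!: derivative_eq_intros simp: algebra_simps)

lemma continuous_Ru: "continuous_on {a..b} Ru"
  using has_real_derivative_Ru by (rule DERIV_continuous_on)

lemma continuous_Rv: "continuous_on {a..b} Rv"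
  using has_real_derivative_Rv by (rule DERIV_continuous_on)

lemma continuous_Rux_Rvx: "continuous_on {a..b} Rux" "continuous_on {a..b} Rvx"
  unfolding Rux_def[abs_def] Rvx_def[abs_def]
  by (intro continuous_intros continuous_on_reaction_factor continuous_on_reaction_factor_deriv eps
      U.continuous_profile V.continuous_profile)+

lemmas continuous_slice =
  U.continuous_profile V.continuous_profile continuous_ut continuous_vt continuous_Ru continuous_Rv
  continuous_Rux_Rvx

lemma pde_u_Ru: "x \<in> {a<..<b} \<Longrightarrow>
    ((\<lambda>y. fluxU eps al D1 chi1 n1 (u y) (ux y) (uxxx y) (vx y)) has_real_derivative (ut x - Ru x)) (at x)"
  using pde_u unfolding Ru_def reacU_eq .

lemma pde_v_Rv: "x \<in> {a<..<b} \<Longrightarrow>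
    ((\<lambda>y. fluxU eps al D2 (- chi2) n2 (v y) (vx y) (vxxx y) (ux y)) has_real_derivative (vt x - Rv x)) (at x)"
  using pde_v unfolding Rv_def reacV_eq fluxV_eq_fluxU .

lemma integral_ut: "integral {a..b} ut = integral {a..b} Ru"
proof -
  have "((\<lambda>x. ut x - Ru x) has_integral 0) {a..b}"
    using eps(1) V.continuous_px uxxx_ends V.px_a V.px_b pde_u_Ru by (rule U.has_integral_flux_derivative)
  then have "integral {a..b} (\<lambda>x. ut x - Ru x) = 0"
    by (rule integral_unique)
  moreover have "integral {a..b} (\<lambda>x. ut x - Ru x) = integral {a..b} ut - integral {a..b} Ru"
    by (intro integral_diff integrable_continuous_real continuous_slice)
  ultimately show ?thesis
    by simp
qed

lemma integral_vt: "integral {a..b} vt = integral {a..b} Rv"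
proof -
  have "((\<lambda>x. vt x - Rv x) has_integral 0) {a..b}"
    using eps(1) U.continuous_px vxxx_ends U.px_a U.px_b pde_v_Rv by (rule V.has_integral_flux_derivative)
  then have "integral {a..b} (\<lambda>x. vt x - Rv x) = 0"
    by (rule integral_unique)
  moreover have "integral {a..b} (\<lambda>x. vt x - Rv x) = integral {a..b} vt - integral {a..b} Rv"
    by (intro integral_diff integrable_continuous_real continuous_slice)
  ultimately show ?thesis
    by simp
qed

lemma mass_growth:
  "integral {a..b} ut + a1 / a2 * integral {a..b} vt
     \<le> (lam1 + a1 + lam2) * (integral {a..b} u + a1 / a2 * integral {a..b} v)"
proof -
  have "integral {a..b} ut + a1 / a2 * integral {a..b} vt = integral {a..b} (\<lambda>x. Ru x + a1 / a2 * Rv x)"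
    unfolding integral_ut integral_vt using pos
    by (subst integral_add) (auto intro!: integrable_continuous_real continuous_intros continuous_Ru continuous_Rv)
  also have "\<dots> \<le> integral {a..b} (\<lambda>x. (lam1 + a1 + lam2) * (u x + a1 / a2 * v x))"
  proof (rule integral_le)
    fix x assume "x \<in> {a..b}"
    then show "Ru x + a1 / a2 * Rv x \<le> (lam1 + a1 + lam2) * (u x + a1 / a2 * v x)"
      unfolding Ru_def Rv_def using U.positive V.positive eps pos
      by (intro reaction_mass_le) (auto simp: less_imp_le)
  qed (use pos in \<open>auto intro!: integrable_continuous_real continuous_intros continuous_Ru continuous_Rv
      U.continuous_p V.continuous_p\<close>)
  also have "\<dots> = (lam1 + a1 + lam2) * (integral {a..b} u + a1 / a2 * integral {a..b} v)"
    unfolding integral_mult_right using pos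
    by (subst integral_add) (auto intro!: integrable_continuous_real continuous_intros U.continuous_p V.continuous_p)
  finally show ?thesis .
qed

lemma energy_dissipation_u:
  "- integral {a..b} (\<lambda>x. uxx x * ut x)
     \<le> - D1 * integral {a..b} (\<lambda>x. (uxx x)\<^sup>2) + chi1\<^sup>2 / (2 * eps) * integral {a..b} (\<lambda>x. (1 + u x) * (vx x)\<^sup>2)
        + integral {a..b} (\<lambda>x. ux x * Rux x)"
proof -
  have "- integral {a..b} (\<lambda>x. uxx x * (ut x - Ru x))
      \<le> - D1 * integral {a..b} (\<lambda>x. (uxx x)\<^sup>2) + chi1\<^sup>2 / (2 * eps) * integral {a..b} (\<lambda>x. (1 + u x) * (vx x)\<^sup>2)"
    using eps(1) _ _ n1 V.continuous_px V.px_a V.px_b uxxx_ends _ pde_u_Ru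
  proof (rule U.flux_dissipation)
    show "continuous_on {a..b} (\<lambda>x. ut x - Ru x)"
      by (intro continuous_intros continuous_ut continuous_Ru)
  qed (use al in auto)
  moreover have "integral {a..b} (\<lambda>x. Ru x * uxx x) = - integral {a..b} (\<lambda>x. Rux x * ux x)"
    using has_real_derivative_Ru continuous_Rux_Rvx(1) by (rule U.integral_mult_pxx)
  moreover have "integral {a..b} (\<lambda>x. uxx x * (ut x - Ru x))
      = integral {a..b} (\<lambda>x. uxx x * ut x) - integral {a..b} (\<lambda>x. Ru x * uxx x)"
    unfolding right_diff_distrib
    by (subst integral_diff) (auto intro!: integrable_continuous_real continuous_intros continuous_slice simp: mult.commute)
  ultimately show ?thesis
    by (simp add: mult.commute)
qed

lemma energy_dissipation_v:
  "- integral {a..b} (\<lambda>x. vxx x * vt x)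
     \<le> - D2 * integral {a..b} (\<lambda>x. (vxx x)\<^sup>2) + chi2\<^sup>2 / (2 * eps) * integral {a..b} (\<lambda>x. (1 + v x) * (ux x)\<^sup>2)
        + integral {a..b} (\<lambda>x. vx x * Rvx x)"
proof -
  have "- integral {a..b} (\<lambda>x. vxx x * (vt x - Rv x))
      \<le> - D2 * integral {a..b} (\<lambda>x. (vxx x)\<^sup>2) + (- chi2)\<^sup>2 / (2 * eps) * integral {a..b} (\<lambda>x. (1 + v x) * (ux x)\<^sup>2)"
    using eps(1) _ _ n2 U.continuous_px U.px_a U.px_b vxxx_ends _ pde_v_Rv
  proof (rule V.flux_dissipation)
    show "continuous_on {a..b} (\<lambda>x. vt x - Rv x)"
      by (intro continuous_intros continuous_vt continuous_Rv)
  qed (use al in auto)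
  moreover have "integral {a..b} (\<lambda>x. Rv x * vxx x) = - integral {a..b} (\<lambda>x. Rvx x * vx x)"
    using has_real_derivative_Rv continuous_Rux_Rvx(2) by (rule V.integral_mult_pxx)
  moreover have "integral {a..b} (\<lambda>x. vxx x * (vt x - Rv x))
      = integral {a..b} (\<lambda>x. vxx x * vt x) - integral {a..b} (\<lambda>x. Rv x * vxx x)"
    unfolding right_diff_distrib
    by (subst integral_diff) (auto intro!: integrable_continuous_real continuous_intros continuous_slice simp: mult.commute)
  ultimately show ?thesis
    by (simp add: mult.commute)
qed

definition "gradient_bound = integral {a..b} (\<lambda>y. 2 * \<bar>ux y * uxx y\<bar>) + integral {a..b} (\<lambda>y. 2 * \<bar>vx y * vxx y\<bar>)"

definition "energy_weight x = chi1\<^sup>2 / (2 * eps) * (1 + u x) + chi2\<^sup>2 / (2 * eps) * (1 + v x)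
                              + (3 * lam1 + 3 * a1 * v x + a1 * u x) + (3 * lam2 + a2 * v x)"

lemma continuous_energy_weight: "continuous_on {a..b} energy_weight"
  unfolding energy_weight_def[abs_def] by (intro continuous_intros continuous_slice)

lemma energy_weight_nonneg: "x \<in> {a..b} \<Longrightarrow> 0 \<le> energy_weight x"
  unfolding energy_weight_def using U.positive[of x] V.positive[of x] pos eps by simp

lemma gradient_square_le: "x \<in> {a..b} \<Longrightarrow> (ux x)\<^sup>2 + (vx x)\<^sup>2 \<le> gradient_bound"
  unfolding gradient_bound_def using U.px_square_le_integral V.px_square_le_integral by (simp add: add_mono)

lemma energy_integrand_le:
  assumes x: "x \<in> {a..b}"
  shows "chi1\<^sup>2 / (2 * eps) * ((1 + u x) * (vx x)\<^sup>2) + chi2\<^sup>2 / (2 * eps) * ((1 + v x) * (ux x)\<^sup>2)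
           + ux x * Rux x + vx x * Rvx x \<le> energy_weight x * gradient_bound"
proof -
  define c1 where "c1 = chi1\<^sup>2 / (2 * eps)"
  define c2 where "c2 = chi2\<^sup>2 / (2 * eps)"
  note pos_x = U.positive[OF x] V.positive[OF x]
  have "c1 * ((1 + u x) * (vx x)\<^sup>2) \<le> c1 * (1 + u x) * ((ux x)\<^sup>2 + (vx x)\<^sup>2)"
    unfolding mult.assoc using pos_x eps by (intro mult_left_mono) (auto simp: c1_def)
  moreover have "c2 * ((1 + v x) * (ux x)\<^sup>2) \<le> c2 * (1 + v x) * ((ux x)\<^sup>2 + (vx x)\<^sup>2)"
    unfolding mult.assoc using pos_x eps by (intro mult_left_mono) (auto simp: c2_def)
  moreover have "ux x * Rux x \<le> (3 * lam1 + 3 * a1 * v x + a1 * u x) * ((ux x)\<^sup>2 + (vx x)\<^sup>2)"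
    unfolding Rux_def using pos_x eps pos by (intro reacU_gradient_le) auto
  moreover have "vx x * Rvx x \<le> (3 * lam2 + a2 * v x) * ((vx x)\<^sup>2 + (ux x)\<^sup>2)"
    unfolding Rvx_def using pos_x eps pos by (intro reacV_gradient_le) auto
  moreover have "energy_weight x * ((ux x)\<^sup>2 + (vx x)\<^sup>2)
      = c1 * (1 + u x) * ((ux x)\<^sup>2 + (vx x)\<^sup>2) + c2 * (1 + v x) * ((ux x)\<^sup>2 + (vx x)\<^sup>2)
        + (3 * lam1 + 3 * a1 * v x + a1 * u x) * ((ux x)\<^sup>2 + (vx x)\<^sup>2)
        + (3 * lam2 + a2 * v x) * ((vx x)\<^sup>2 + (ux x)\<^sup>2)"
    unfolding energy_weight_def c1_def c2_def by (simp add: algebra_simps)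
  ultimately have "c1 * ((1 + u x) * (vx x)\<^sup>2) + c2 * ((1 + v x) * (ux x)\<^sup>2) + ux x * Rux x + vx x * Rvx x
      \<le> energy_weight x * ((ux x)\<^sup>2 + (vx x)\<^sup>2)"
    by linarith
  also have "\<dots> \<le> energy_weight x * gradient_bound"
    using gradient_square_le[OF x] energy_weight_nonneg[OF x] by (rule mult_left_mono)
  finally show ?thesis
    unfolding c1_def c2_def .
qed

lemma energy_production_le:
  "- integral {a..b} (\<lambda>x. uxx x * ut x) - integral {a..b} (\<lambda>x. vxx x * vt x)
     \<le> - D1 * integral {a..b} (\<lambda>x. (uxx x)\<^sup>2) - D2 * integral {a..b} (\<lambda>x. (vxx x)\<^sup>2)
        + gradient_bound * integral {a..b} energy_weight"
proof -
  have "chi1\<^sup>2 / (2 * eps) * integral {a..b} (\<lambda>x. (1 + u x) * (vx x)\<^sup>2)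
        + chi2\<^sup>2 / (2 * eps) * integral {a..b} (\<lambda>x. (1 + v x) * (ux x)\<^sup>2)
        + integral {a..b} (\<lambda>x. ux x * Rux x) + integral {a..b} (\<lambda>x. vx x * Rvx x)
      = integral {a..b} (\<lambda>x. chi1\<^sup>2 / (2 * eps) * ((1 + u x) * (vx x)\<^sup>2)
                               + chi2\<^sup>2 / (2 * eps) * ((1 + v x) * (ux x)\<^sup>2) + ux x * Rux x + vx x * Rvx x)"
    using eps
    by (subst integral_add, (auto intro!: integrable_continuous_real continuous_intros continuous_slice)[2])+ simp
  also have "\<dots> \<le> integral {a..b} (\<lambda>x. energy_weight x * gradient_bound)"
    using energy_integrand_le
    by (intro integral_le integrable_continuous_real continuous_intros continuous_slice continuous_energy_weight)
  also have "\<dots> = gradient_bound * integral {a..b} energy_weight"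
    by (simp add: mult.commute)
  finally show ?thesis
    using energy_dissipation_u energy_dissipation_v by linarith
qed

lemma integral_energy_weight_le:
  assumes "integral {a..b} u \<le> M" "integral {a..b} v \<le> M"
  shows "integral {a..b} energy_weight
           \<le> (chi1\<^sup>2 / (2 * eps) + chi2\<^sup>2 / (2 * eps)) * (b - a + M) + 3 * (lam1 + lam2) * (b - a) + (4 * a1 + a2) * M"
proof -
  define c1 where "c1 = chi1\<^sup>2 / (2 * eps)"
  define c2 where "c2 = chi2\<^sup>2 / (2 * eps)"
  have "0 \<le> c1" "0 \<le> c2"
    using eps by (auto simp: c1_def c2_def)
  have "integral {a..b} energy_weight
      = integral {a..b} (\<lambda>x. (c1 + c2 + 3 * lam1 + 3 * lam2) + ((c1 + a1) * u x + (c2 + 3 * a1 + a2) * v x))"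
    unfolding energy_weight_def c1_def[symmetric] c2_def[symmetric]
    by (rule integral_cong) (simp add: algebra_simps)
  also have "\<dots> = (c1 + c2 + 3 * lam1 + 3 * lam2) * (b - a)
                    + ((c1 + a1) * integral {a..b} u + (c2 + 3 * a1 + a2) * integral {a..b} v)"
    using U.ab by (subst integral_add, (auto intro!: integrable_continuous_real continuous_intros continuous_slice)[2])+
      (simp; simp add: algebra_simps)
  also have "\<dots> \<le> (c1 + c2 + 3 * lam1 + 3 * lam2) * (b - a) + ((c1 + a1) * M + (c2 + 3 * a1 + a2) * M)"
    using assms pos \<open>0 \<le> c1\<close> \<open>0 \<le> c2\<close> by (intro add_mono mult_left_mono order_refl) auto
  finally show ?thesis
    unfolding c1_def[symmetric] c2_def[symmetric] by (simp add: algebra_simps)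
qed

lemma energy_growth_le:
  assumes "0 < Q" "integral {a..b} energy_weight \<le> Q"
  shows "- integral {a..b} (\<lambda>x. uxx x * ut x) - integral {a..b} (\<lambda>x. vxx x * vt x)
           \<le> Q\<^sup>2 / min D1 D2 * (integral {a..b} (\<lambda>x. (ux x)\<^sup>2) + integral {a..b} (\<lambda>x. (vx x)\<^sup>2))"
proof -
  define Dm where "Dm = min D1 D2"
  define A where "A = integral {a..b} (\<lambda>x. (uxx x)\<^sup>2) + integral {a..b} (\<lambda>x. (vxx x)\<^sup>2)"
  define E where "E = integral {a..b} (\<lambda>x. (ux x)\<^sup>2) + integral {a..b} (\<lambda>x. (vx x)\<^sup>2)"
  have "0 < Dm"
    using pos by (simp add: Dm_def)
  have "0 \<le> gradient_bound"
    unfolding gradient_bound_def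
    by (intro add_nonneg_nonneg integral_nonneg integrable_continuous_real continuous_intros continuous_slice) auto
  have "gradient_bound \<le> Dm / Q * A + E / (Dm / Q)"
    using U.integral_px_pxx_young[of "Dm / Q"] V.integral_px_pxx_young[of "Dm / Q"] \<open>0 < Dm\<close> assms(1)
    unfolding gradient_bound_def A_def E_def by (simp add: algebra_simps add_divide_distrib)
  moreover have "0 \<le> integral {a..b} energy_weight"
    using energy_weight_nonneg by (intro integral_nonneg integrable_continuous_real continuous_energy_weight)
  ultimately have "gradient_bound * integral {a..b} energy_weight \<le> (Dm / Q * A + E / (Dm / Q)) * Q"
    using assms(2) \<open>0 \<le> gradient_bound\<close> by (intro mult_mono') auto
  also have "\<dots> = Dm * A + Q\<^sup>2 / Dm * E"
    using assms(1) \<open>0 < Dm\<close> by (simp add: field_simps power2_eq_square)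
  finally have "gradient_bound * integral {a..b} energy_weight \<le> Dm * A + Q\<^sup>2 / Dm * E" .
  moreover have "Dm * A \<le> D1 * integral {a..b} (\<lambda>x. (uxx x)\<^sup>2) + D2 * integral {a..b} (\<lambda>x. (vxx x)\<^sup>2)"
    unfolding A_def Dm_def distrib_left
    by (intro add_mono mult_right_mono integral_nonneg integrable_continuous_real continuous_intros continuous_slice) auto
  ultimately show ?thesis
    using energy_production_le unfolding Dm_def E_def by linarith
qed

end

section \<open>Evolution in time\<close>

lemma open_tint: "open (tint Tm)" and convex_tint: "convex (tint Tm)"
proof -
  have "tint Tm = {0<..<real_of_ereal Tm} \<or> tint Tm = {0<..} \<or> tint Tm = {}"
    by (cases Tm) (auto simp: tint_def)
  then show "open (tint Tm)"
    by (metis open_empty open_greaterThan open_greaterThanLessThan)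
  from \<open>tint Tm = _ \<or> _\<close> show "convex (tint Tm)"
    by (metis convex_empty convex_real_interval(3,8))
qed

lemma tint_subset_tint0: "tint Tm \<subseteq> tint0 Tm"
  by (auto simp: tint_def tint0_def)

lemma zero_in_tint0: "0 < Tm \<Longrightarrow> 0 \<in> tint0 Tm"
  by (simp add: tint0_def zero_ereal_def)

lemma tint_initial_segment:
  assumes "t \<in> tint Tm"
  shows "{0..t} \<subseteq> tint0 Tm" "{0<..t} \<subseteq> tint Tm"
  using assms by (auto simp: tint_def tint0_def) (meson ereal_less_eq(3) le_less_trans)+

context
  fixes a b :: real and Tm :: ereal and w wx wxx wxxx wxxxx wt :: "real \<Rightarrow> real \<Rightarrow> real"
  assumes regular: "classical_comp a b Tm w wx wxx wxxx wxxxx wt"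
begin

lemma classical_comp_D:
  "\<And>t x. t \<in> tint Tm \<Longrightarrow> x \<in> {a..b} \<Longrightarrow> ((\<lambda>y. w y t) has_real_derivative wx x t) (at x within {a..b})"
  "\<And>t x. t \<in> tint Tm \<Longrightarrow> x \<in> {a..b} \<Longrightarrow> ((\<lambda>y. wx y t) has_real_derivative wxx x t) (at x within {a..b})"
  "\<And>t x. t \<in> tint Tm \<Longrightarrow> x \<in> {a..b} \<Longrightarrow> ((\<lambda>y. wxx y t) has_real_derivative wxxx x t) (at x within {a..b})"
  "\<And>t x. t \<in> tint Tm \<Longrightarrow> x \<in> {a..b} \<Longrightarrow> ((\<lambda>y. wxxx y t) has_real_derivative wxxxx x t) (at x within {a..b})"
  "\<And>t x. t \<in> tint Tm \<Longrightarrow> x \<in> {a..b} \<Longrightarrow> ((\<lambda>s. w x s) has_real_derivative wt x t) (at t)"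
  "continuous_on ({a..b} \<times> tint0 Tm) (\<lambda>(x, t). w x t)"
  "continuous_on ({a..b} \<times> tint0 Tm) (\<lambda>(x, t). wx x t)"
  "continuous_on ({a..b} \<times> tint Tm) (\<lambda>(x, t). wxx x t)"
  "continuous_on ({a..b} \<times> tint Tm) (\<lambda>(x, t). wt x t)"
  using regular tint_subset_tint0 unfolding classical_comp_def by blast+

lemma neumann_profile_slice:
  assumes "a < b" "t \<in> tint Tm" "\<And>x. x \<in> {a..b} \<Longrightarrow> 0 < w x t" "wx a t = 0" "wx b t = 0"
  shows "neumann_profile a b (\<lambda>x. w x t) (\<lambda>x. wx x t) (\<lambda>x. wxx x t) (\<lambda>x. wxxx x t)"
  using assms classical_comp_D(1-3) DERIV_continuous_on[OF classical_comp_D(4)[OF assms(2)]]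
  by unfold_locales auto

lemma continuous_on_integral_slice:
  "continuous_on (tint0 Tm) (\<lambda>t. integral {a..b} (\<lambda>x. w x t))"
  "continuous_on (tint0 Tm) (\<lambda>t. integral {a..b} (\<lambda>x. (wx x t)\<^sup>2))"
  using classical_comp_D(6,7)
  by (auto intro!: continuous_on_integral_param continuous_intros simp: case_prod_unfold)

lemma has_real_derivative_integral_slice:
  assumes "t \<in> tint Tm"
  shows "((\<lambda>t. integral {a..b} (\<lambda>x. w x t)) has_real_derivative integral {a..b} (\<lambda>x. wt x t)) (at t)"
proof (rule has_real_derivative_integral_param[OF open_tint convex_tint assms])
  show "continuous_on {a..b} (\<lambda>x. w x s)" if "s \<in> tint Tm" for s
    using continuous_on_slice[OF classical_comp_D(6)] tint_subset_tint0 that by blast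
qed (use classical_comp_D(5,9) in auto)

lemma has_real_derivative_integral_square_slice:
  assumes "a \<le> b" "t \<in> tint Tm" "\<And>s. s \<in> tint Tm \<Longrightarrow> wx a s = 0" "\<And>s. s \<in> tint Tm \<Longrightarrow> wx b s = 0"
  shows "((\<lambda>t. integral {a..b} (\<lambda>x. (wx x t)\<^sup>2)) has_real_derivative
           -2 * integral {a..b} (\<lambda>x. wxx x t * wt x t)) (at t)"
  using assms(1) open_tint convex_tint assms(2) classical_comp_D(1,2,5,8,9) assms(3,4)
  by (rule has_real_derivative_integral_square)

end

locale approx_solution =
  fixes a b D1 D2 a1 a2 lam1 lam2 chi1 chi2 al n1 n2 eps :: real
    and Tm :: ereal
    and u ux uxx uxxx uxxxx ut v vx vxx vxxx vxxxx vt :: "real \<Rightarrow> real \<Rightarrow> real"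
  assumes ab: "a < b"
    and pos: "0 < D1" "0 < D2" "0 < a1" "0 < a2" "0 < lam1" "0 < lam2"
    and al: "0 < al" "al \<le> 1 / 2"
    and n1: "1 \<le> n1" "n1 \<le> 2" and n2: "1 \<le> n2" "n2 \<le> 2"
    and eps: "0 < eps" "eps < 1"
    and Tm: "0 < Tm"
    and reg_u: "classical_comp a b Tm u ux uxx uxxx uxxxx ut"
    and reg_v: "classical_comp a b Tm v vx vxx vxxx vxxxx vt"
    and posit: "\<forall>t\<in>tint0 Tm. \<forall>x\<in>{a..b}. 0 < u x t \<and> 0 < v x t"
    and bc: "\<forall>t\<in>tint Tm. ux a t = 0 \<and> ux b t = 0 \<and> uxxx a t = 0 \<and> uxxx b t = 0 \<and>
                          vx a t = 0 \<and> vx b t = 0 \<and> vxxx a t = 0 \<and> vxxx b t = 0"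
    and pde_u: "\<forall>t\<in>tint Tm. \<forall>x\<in>{a<..<b}.
        ((\<lambda>y. fluxU eps al D1 chi1 n1 (u y t) (ux y t) (uxxx y t) (vx y t))
           has_real_derivative (ut x t - reacU eps lam1 a1 (u x t) (v x t))) (at x)"
    and pde_v: "\<forall>t\<in>tint Tm. \<forall>x\<in>{a<..<b}.
        ((\<lambda>y. fluxV eps al D2 chi2 n2 (v y t) (vx y t) (vxxx y t) (ux y t))
           has_real_derivative (vt x t - reacV eps lam2 a2 (u x t) (v x t))) (at x)"
begin

lemma system_slice_at:
  assumes "t \<in> tint Tm"
  shows "system_slice a b (\<lambda>x. u x t) (\<lambda>x. ux x t) (\<lambda>x. uxx x t) (\<lambda>x. uxxx x t)
           (\<lambda>x. v x t) (\<lambda>x. vx x t) (\<lambda>x. vxx x t) (\<lambda>x. vxxx x t) (\<lambda>x. ut x t) (\<lambda>x. vt x t)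
           eps al n1 n2 D1 D2 chi1 chi2 lam1 lam2 a1 a2"
proof (intro system_slice.intro system_slice_axioms.intro)
  have "t \<in> tint0 Tm"
    using assms tint_subset_tint0 by blast
  then show "neumann_profile a b (\<lambda>x. u x t) (\<lambda>x. ux x t) (\<lambda>x. uxx x t) (\<lambda>x. uxxx x t)"
    and "neumann_profile a b (\<lambda>x. v x t) (\<lambda>x. vx x t) (\<lambda>x. vxx x t) (\<lambda>x. vxxx x t)"
    using reg_u reg_v ab assms posit bc by (auto intro!: neumann_profile_slice)
  show "continuous_on {a..b} (\<lambda>x. ut x t)" "continuous_on {a..b} (\<lambda>x. vt x t)"
    using continuous_on_slice[OF classical_comp_D(9)[OF reg_u] assms]
      continuous_on_slice[OF classical_comp_D(9)[OF reg_v] assms] .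
qed (use assms eps al n1 n2 pos bc pde_u pde_v in auto)

definition "mass t = integral {a..b} (\<lambda>x. u x t) + a1 / a2 * integral {a..b} (\<lambda>x. v x t)"

definition "energy t = integral {a..b} (\<lambda>x. (ux x t)\<^sup>2) + integral {a..b} (\<lambda>x. (vx x t)\<^sup>2)"

lemma integral_nonneg_slice:
  assumes "t \<in> tint0 Tm"
  shows "0 \<le> integral {a..b} (\<lambda>x. u x t)" "0 \<le> integral {a..b} (\<lambda>x. v x t)"
  using assms posit continuous_on_slice[OF classical_comp_D(6)[OF reg_u] assms]
    continuous_on_slice[OF classical_comp_D(6)[OF reg_v] assms]
  by (auto intro!: integral_nonneg integrable_continuous_real simp: less_imp_le)

lemma integrals_le_mass:
  assumes "t \<in> tint0 Tm"
  shows "integral {a..b} (\<lambda>x. u x t) \<le> mass t" "integral {a..b} (\<lambda>x. v x t) \<le> a2 / a1 * mass t"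
  using integral_nonneg_slice[OF assms] pos unfolding mass_def by (simp_all add: field_simps)

lemma mass_le:
  assumes "t \<in> tint Tm"
  shows "mass t \<le> mass 0 * exp ((lam1 + a1 + lam2) * t)"
proof (rule gronwall_exp_bound)
  show "0 \<le> t"
    using assms by (simp add: tint_def)
  show "continuous_on {0..t} mass"
    unfolding mass_def[abs_def] using tint_initial_segment(1)[OF assms]
    by (intro continuous_intros continuous_on_integral_slice(1)[OF reg_u, THEN continuous_on_subset]
        continuous_on_integral_slice(1)[OF reg_v, THEN continuous_on_subset])
  fix s assume "0 < s" "s < t"
  then have s: "s \<in> tint Tm"
    using tint_initial_segment(2)[OF assms] by auto
  show "(mass has_real_derivative
          integral {a..b} (\<lambda>x. ut x s) + a1 / a2 * integral {a..b} (\<lambda>x. vt x s)) (at s)"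
    unfolding mass_def[abs_def]
    using has_real_derivative_integral_slice[OF reg_u s] has_real_derivative_integral_slice[OF reg_v s] pos
    by (auto intro!: derivative_eq_intros)
  show "integral {a..b} (\<lambda>x. ut x s) + a1 / a2 * integral {a..b} (\<lambda>x. vt x s)
          \<le> (lam1 + a1 + lam2) * mass s"
    unfolding mass_def using system_slice.mass_growth[OF system_slice_at[OF s]] .
qed

text \<open>The summand \<open>1\<close> only makes the coefficient positive.\<close>

definition "energy_coefficient M =
  (chi1\<^sup>2 / (2 * eps) + chi2\<^sup>2 / (2 * eps)) * (b - a + M) + 3 * (lam1 + lam2) * (b - a) + (4 * a1 + a2) * M + 1"

lemma energy_coefficient_pos: "0 \<le> M \<Longrightarrow> 0 < energy_coefficient M"
  unfolding energy_coefficient_def using ab pos eps by (intro add_nonneg_pos add_nonneg_nonneg) auto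

lemma energy_le:
  assumes "t \<in> tint Tm" "0 \<le> M"
    and M: "\<And>s. s \<in> {0<..t} \<Longrightarrow> integral {a..b} (\<lambda>x. u x s) \<le> M \<and> integral {a..b} (\<lambda>x. v x s) \<le> M"
  shows "energy t \<le> energy 0 * exp (2 * (energy_coefficient M)\<^sup>2 / min D1 D2 * t)"
proof (rule gronwall_exp_bound)
  show "0 \<le> t"
    using assms by (simp add: tint_def)
  show "continuous_on {0..t} energy"
    unfolding energy_def[abs_def] using tint_initial_segment(1)[OF assms(1)]
    by (intro continuous_intros continuous_on_integral_slice(2)[OF reg_u, THEN continuous_on_subset]
        continuous_on_integral_slice(2)[OF reg_v, THEN continuous_on_subset])
  fix s assume "0 < s" "s < t"
  then have s: "s \<in> tint Tm" "s \<in> {0<..t}"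
    using tint_initial_segment(2)[OF assms(1)] by auto
  show "(energy has_real_derivative
          -2 * integral {a..b} (\<lambda>x. uxx x s * ut x s) + -2 * integral {a..b} (\<lambda>x. vxx x s * vt x s)) (at s)"
    unfolding energy_def[abs_def] using ab bc
    by (intro DERIV_add has_real_derivative_integral_square_slice[OF reg_u _ s(1)]
        has_real_derivative_integral_square_slice[OF reg_v _ s(1)]) auto
  interpret system_slice a b "\<lambda>x. u x s" "\<lambda>x. ux x s" "\<lambda>x. uxx x s" "\<lambda>x. uxxx x s"
      "\<lambda>x. v x s" "\<lambda>x. vx x s" "\<lambda>x. vxx x s" "\<lambda>x. vxxx x s" "\<lambda>x. ut x s" "\<lambda>x. vt x s"
      eps al n1 n2 D1 D2 chi1 chi2 lam1 lam2 a1 a2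
    using system_slice_at[OF s(1)] .
  have "integral {a..b} energy_weight \<le> energy_coefficient M"
    using integral_energy_weight_le[of M] M[OF s(2)] unfolding energy_coefficient_def by simp
  from energy_growth_le[OF energy_coefficient_pos[OF assms(2)] this]
  show "-2 * integral {a..b} (\<lambda>x. uxx x s * ut x s) + -2 * integral {a..b} (\<lambda>x. vxx x s * vt x s)
          \<le> 2 * (energy_coefficient M)\<^sup>2 / min D1 D2 * energy s"
    unfolding energy_def by simp
qed

lemma Linf_le:
  assumes "t \<in> tint Tm"
  shows "Linf a b (\<lambda>x. u x t) + Linf a b (\<lambda>x. v x t)
           \<le> (integral {a..b} (\<lambda>x. u x t) + integral {a..b} (\<lambda>x. v x t)) / (b - a) + (b - a) + energy t / 2"
proof -
  interpret system_slice a b "\<lambda>x. u x t" "\<lambda>x. ux x t" "\<lambda>x. uxx x t" "\<lambda>x. uxxx x t"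
      "\<lambda>x. v x t" "\<lambda>x. vx x t" "\<lambda>x. vxx x t" "\<lambda>x. vxxx x t" "\<lambda>x. ut x t" "\<lambda>x. vt x t"
      eps al n1 n2 D1 D2 chi1 chi2 lam1 lam2 a1 a2
    using system_slice_at[OF assms] .
  have "Linf a b (\<lambda>x. u x t) \<le> integral {a..b} (\<lambda>x. u x t) / (b - a) + (b - a) / 2
                                    + integral {a..b} (\<lambda>x. (ux x t)\<^sup>2) / 2"
    using ab U.p_deriv U.continuous_px U.positive by (intro Linf_le_mean_plus_energy) (auto simp: less_imp_le)
  moreover have "Linf a b (\<lambda>x. v x t) \<le> integral {a..b} (\<lambda>x. v x t) / (b - a) + (b - a) / 2
                                    + integral {a..b} (\<lambda>x. (vx x t)\<^sup>2) / 2"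
    using ab V.p_deriv V.continuous_px V.positive by (intro Linf_le_mean_plus_energy) (auto simp: less_imp_le)
  ultimately show ?thesis
    unfolding energy_def add_divide_distrib by argo
qed

lemma energy_nonneg: "t \<in> tint0 Tm \<Longrightarrow> 0 \<le> energy t"
  unfolding energy_def
  using continuous_on_slice[OF classical_comp_D(7)[OF reg_u]] continuous_on_slice[OF classical_comp_D(7)[OF reg_v]]
  by (intro add_nonneg_nonneg integral_nonneg integrable_continuous_real continuous_intros) auto

lemma integrals_bounded:
  assumes "0 \<le> T"
  defines "M \<equiv> (1 + a2 / a1) * (mass 0 * exp ((lam1 + a1 + lam2) * T))"
  shows "0 \<le> M"
    and "\<And>t. t \<in> tint Tm \<Longrightarrow> t \<le> T \<Longrightarrow>
      integral {a..b} (\<lambda>x. u x t) \<le> M \<and> integral {a..b} (\<lambda>x. v x t) \<le> M"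
proof -
  have "0 \<le> mass 0"
    using integral_nonneg_slice[OF zero_in_tint0[OF Tm]] pos unfolding mass_def by simp
  then show "0 \<le> M"
    unfolding M_def using pos by simp
  fix t assume t: "t \<in> tint Tm" "t \<le> T"
  define MT where "MT = mass 0 * exp ((lam1 + a1 + lam2) * T)"
  have "mass t \<le> MT"
    unfolding MT_def using mass_le[OF t(1)] \<open>0 \<le> mass 0\<close> pos t(2)
    by (smt (verit) exp_le_cancel_iff mult_left_mono mult_right_mono)
  moreover have "0 \<le> MT" "0 \<le> a2 / a1 * MT"
    unfolding MT_def using \<open>0 \<le> mass 0\<close> pos by simp_all
  moreover have "a2 / a1 * mass t \<le> a2 / a1 * MT"
    using \<open>mass t \<le> MT\<close> pos by (intro mult_left_mono) auto
  moreover note integrals_le_mass[OF subsetD[OF tint_subset_tint0 t(1)]]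
  moreover have "M = MT + a2 / a1 * MT"
    unfolding M_def MT_def by (simp add: algebra_simps)
  ultimately show "integral {a..b} (\<lambda>x. u x t) \<le> M \<and> integral {a..b} (\<lambda>x. v x t) \<le> M"
    by argo
qed

lemma energy_bounded:
  assumes "0 \<le> M"
    and M: "\<And>s. s \<in> tint Tm \<Longrightarrow> s \<le> T \<Longrightarrow>
      integral {a..b} (\<lambda>x. u x s) \<le> M \<and> integral {a..b} (\<lambda>x. v x s) \<le> M"
    and t: "t \<in> tint Tm" "t \<le> T"
  shows "energy t \<le> energy 0 * exp (2 * (energy_coefficient M)\<^sup>2 / min D1 D2 * T)"
proof -
  have "energy t \<le> energy 0 * exp (2 * (energy_coefficient M)\<^sup>2 / min D1 D2 * t)"
    using t tint_initial_segment(2)[OF t(1)] by (intro energy_le \<open>0 \<le> M\<close> M) auto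
  also have "\<dots> \<le> energy 0 * exp (2 * (energy_coefficient M)\<^sup>2 / min D1 D2 * T)"
    using t(2) pos energy_nonneg[OF zero_in_tint0[OF Tm]]
    by (intro mult_left_mono exp_mono mult_left_mono) auto
  finally show ?thesis .
qed

lemma finite_time_bound:
  assumes "0 < T"
  shows "\<exists>C>0. \<forall>t. 0 < t \<and> t < T \<and> ereal t < Tm \<longrightarrow>
           energy t \<le> C \<and> Linf a b (\<lambda>x. u x t) + Linf a b (\<lambda>x. v x t) \<le> C"
proof -
  obtain M where "0 \<le> M"
    and M: "\<And>t. t \<in> tint Tm \<Longrightarrow> t \<le> T \<Longrightarrow>
      integral {a..b} (\<lambda>x. u x t) \<le> M \<and> integral {a..b} (\<lambda>x. v x t) \<le> M"
    using integrals_bounded[of T] assms by auto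
  define EB where "EB = energy 0 * exp (2 * (energy_coefficient M)\<^sup>2 / min D1 D2 * T)"
  have "0 \<le> EB"
    unfolding EB_def using energy_nonneg[OF zero_in_tint0[OF Tm]] by simp
  define C where "C = EB + 2 * M / (b - a) + (b - a) + 1"
  show ?thesis
  proof (intro exI[of _ C] conjI allI impI)
    show "0 < C"
      unfolding C_def using \<open>0 \<le> EB\<close> \<open>0 \<le> M\<close> ab by (intro add_pos_pos add_nonneg_pos) auto
    fix t assume "0 < t \<and> t < T \<and> ereal t < Tm"
    then have t: "t \<in> tint Tm" "t \<le> T"
      by (auto simp: tint_def)
    have "(integral {a..b} (\<lambda>x. u x t) + integral {a..b} (\<lambda>x. v x t)) / (b - a) \<le> 2 * M / (b - a)"
      using M[OF t] ab by (intro divide_right_mono) auto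
    moreover have "0 \<le> 2 * M / (b - a)"
      using \<open>0 \<le> M\<close> ab by simp
    ultimately show "energy t \<le> C" "Linf a b (\<lambda>x. u x t) + Linf a b (\<lambda>x. v x t) \<le> C"
      using energy_bounded[OF \<open>0 \<le> M\<close> M t] Linf_le[OF t(1)] \<open>0 \<le> EB\<close> ab
      unfolding C_def EB_def[symmetric] by linarith+
  qed
qed

end

theorem lemma2p6:
  fixes a b D1 D2 a1 a2 lam1 lam2 chi1 chi2 alpha n1 n2 eps T :: real
    and u0 u0x v0 v0x :: "real \<Rightarrow> real"
    and U V :: "real \<Rightarrow> nat \<Rightarrow> real \<Rightarrow> real"
    and Tm :: ereal
    and u ux uxx uxxx uxxxx ut v vx vxx vxxx vxxxx vt :: "real \<Rightarrow> real \<Rightarrow> real"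
  assumes ab: "a < b"
    and pos: "0 < D1" "0 < D2" "0 < a1" "0 < a2" "0 < lam1" "0 < lam2" "0 < chi1" "0 < chi2"
    and alpha: "0 < alpha" "alpha \<le> 1/2"
    and n1: "1 \<le> n1" "n1 \<le> 2" and n2: "1 \<le> n2" "n2 \<le> 2"
    and IE_u0: "W12_pos a b u0 u0x" and IE_v0: "W12_pos a b v0 v0x"
    and IE_U: "approx_data a b u0 u0x U" and IE_V: "approx_data a b v0 v0x V"
    and eps: "0 < eps" "eps < 1"
    and T: "0 < T"
    and Tm: "0 < Tm"
    and reg_u: "classical_comp a b Tm u ux uxx uxxx uxxxx ut"
    and reg_v: "classical_comp a b Tm v vx vxx vxxx vxxxx vt"
    and posit: "\<forall>t\<in>tint0 Tm. \<forall>x\<in>{a..b}. 0 < u x t \<and> 0 < v x t"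
    and init: "\<forall>x\<in>{a..b}. u x 0 = U eps 0 x \<and> v x 0 = V eps 0 x"
    and bc: "\<forall>t\<in>tint Tm. ux a t = 0 \<and> ux b t = 0 \<and> uxxx a t = 0 \<and> uxxx b t = 0 \<and>
                          vx a t = 0 \<and> vx b t = 0 \<and> vxxx a t = 0 \<and> vxxx b t = 0"
    and pde_u: "\<forall>t\<in>tint Tm. \<forall>x\<in>{a<..<b}.
        ((\<lambda>y. fluxU eps alpha D1 chi1 n1 (u y t) (ux y t) (uxxx y t) (vx y t))
           has_real_derivative (ut x t - reacU eps lam1 a1 (u x t) (v x t))) (at x)"
    and pde_v: "\<forall>t\<in>tint Tm. \<forall>x\<in>{a<..<b}.
        ((\<lambda>y. fluxV eps alpha D2 chi2 n2 (v y t) (vx y t) (vxxx y t) (ux y t))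
           has_real_derivative (vt x t - reacV eps lam2 a2 (u x t) (v x t))) (at x)"
    and maxT: "maximal_time Tm (\<lambda>t. W22n a b (\<lambda>x. u x t) (\<lambda>x. ux x t) (\<lambda>x. uxx x t)
                                  + Linf a b (\<lambda>x. 1 / u x t)
                                  + W22n a b (\<lambda>x. v x t) (\<lambda>x. vx x t) (\<lambda>x. vxx x t)
                                  + Linf a b (\<lambda>x. 1 / v x t))"
  shows "\<exists>C>0. \<forall>t. 0 < t \<and> t < T \<and> ereal t < Tm \<longrightarrow>
           integral {a..b} (\<lambda>x. (ux x t)\<^sup>2) + integral {a..b} (\<lambda>x. (vx x t)\<^sup>2) \<le> C \<and>
           Linf a b (\<lambda>x. u x t) + Linf a b (\<lambda>x. v x t) \<le> C"
proof -
  \<comment> \<open>The bound depends on the data only through the mass and energy at time 0.\<close>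
  interpret approx_solution a b D1 D2 a1 a2 lam1 lam2 chi1 chi2 alpha n1 n2 eps Tm
      u ux uxx uxxx uxxxx ut v vx vxx vxxx vxxxx vt
    using ab pos alpha n1 n2 eps Tm reg_u reg_v posit bc pde_u pde_v by unfold_locales auto
  from finite_time_bound[OF T] show ?thesis
    unfolding energy_def .
qed

end
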